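(* $(S,s)$ is the final coalgebra for $F=M\otimes-$ on $\mathbf{Met_3}^{C}$: for every coalgebra $(X,e\colon X\to M\otimes X)$ in $\mathbf{Met_3}^{C}$ there is a unique morphism $f\colon X\to S$ in $\mathbf{Met_3}^{C}$ with $s\circ f=(M\otimes f)\circ e$.
   Context: A tripointed metric space is a set with three distinct points $T,L,R$ and a metric bounded by $1$ in which $T,L,R$ have pairwise distance $1$. $\mathbf{Met_3}^{C}$: tripointed metric spaces with continuous maps preserving $T,L,R$. Let $M=\{a,b,c\}$. For a tripointed metric space $X$, $M\times X$ has metric $d((m,x),(n,y))=\tfrac12d(x,y)$ if $m=n$ and $1$ otherwise; $M\otimes X$ is the quotient metric space by the equivalence relation generated by $(b,T)\sim(a,L)$, $(a,R)\sim(c,T)$, $(c,L)\sim(b,R)$, with elements $m\otimes x$ and distinguished points $a\otimes T,b\otimes L,c\otimes R$; $F=M\otimes-$ with $(M\otimes f)(m\otimes x)=m\otimes f(x)$. A coalgebra is $(X,e\colon X\to FX)$. Let $I=\{T,L,R\}$ with the discrete metric and $!\colon I\to FI$ be $T\mapsto a\otimes T$, $L\mapsto b\otimes L$, $R\mapsto c\otimes R$; the maps $F^n!$ are isometric embeddings and $G$ is the metric union (colimit) of $I\to FI\to F^2I\to\cdots$, i.e. expressions $m_0\otimes\cdots\otimes m_{n-1}\otimes z$ ($z\in\{T,L,R\}$) modulo the induced identifications, with $g\colon M\otimes G\to G$, $g(m\otimes w)=m\otimes w$, a bijective isometry ($(G,g)$ is the initial $F$-algebra in the category of tripointed metric spaces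 with short maps). $S$ is the Cauchy completion of $G$, tripointed by $T,L,R$; the completion of $g$ yields a bijective isometry $\psi\colon M\otimes S\to S$, and $s=\psi^{-1}\colon S\to M\otimes S$. *)

theory Defs
  imports "HOL-Analysis.Analysis"
begin

datatype Mlet = A | B | C
datatype Pt = T | L | R

definition metric_on :: "'a set \<Rightarrow> ('a \<Rightarrow> 'a \<Rightarrow> real) \<Rightarrow> bool" where
  "metric_on X d \<longleftrightarrow>
     (\<forall>x\<in>X. \<forall>y\<in>X. 0 \<le> d x y \<and> d x y = d y x \<and> (d x y = 0 \<longleftrightarrow> x = y)) \<and>
     (\<forall>x\<in>X. \<forall>y\<in>X. \<forall>z\<in>X. d x z \<le> d x y + d y z)"

definition tripointed :: "'a set \<Rightarrow> ('a \<Rightarrow> 'a \<Rightarrow> real) \<Rightarrow> 'a \<Rightarrow> 'a \<Rightarrow> 'a \<Rightarrow> bool" where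
  "tripointed X d t l r \<longleftrightarrow> metric_on X d \<and> (\<forall>x\<in>X. \<forall>y\<in>X. d x y \<le> 1) \<and>
     t \<in> X \<and> l \<in> X \<and> r \<in> X \<and> t \<noteq> l \<and> t \<noteq> r \<and> l \<noteq> r \<and>
     d t l = 1 \<and> d t r = 1 \<and> d l r = 1"

definition mcont :: "'a set \<Rightarrow> ('a \<Rightarrow> 'a \<Rightarrow> real) \<Rightarrow> 'b set \<Rightarrow> ('b \<Rightarrow> 'b \<Rightarrow> real) \<Rightarrow> ('a \<Rightarrow> 'b) \<Rightarrow> bool" where
  "mcont X d Y d' f \<longleftrightarrow> f ` X \<subseteq> Y \<and>
     (\<forall>x\<in>X. \<forall>\<epsilon>>0. \<exists>\<delta>>0. \<forall>y\<in>X. d x y < \<delta> \<longrightarrow> d' (f x) (f y) < \<epsilon>)"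

definition met3c_hom :: "'a set \<Rightarrow> ('a \<Rightarrow> 'a \<Rightarrow> real) \<Rightarrow> 'a \<Rightarrow> 'a \<Rightarrow> 'a \<Rightarrow>
    'b set \<Rightarrow> ('b \<Rightarrow> 'b \<Rightarrow> real) \<Rightarrow> 'b \<Rightarrow> 'b \<Rightarrow> 'b \<Rightarrow> ('a \<Rightarrow> 'b) \<Rightarrow> bool" where
  "met3c_hom X d t l r Y d' t' l' r' f \<longleftrightarrow>
     mcont X d Y d' f \<and> f t = t' \<and> f l = l' \<and> f r = r'"

section \<open>The functor M \<otimes> -\<close>

definition tbase :: "'x \<Rightarrow> 'x \<Rightarrow> 'x \<Rightarrow> ((Mlet \<times> 'x) \<times> (Mlet \<times> 'x)) set" where
  "tbase t l r = {((B,t),(A,l)), ((A,r),(C,t)), ((C,l),(B,r))}"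

definition tequiv :: "'x set \<Rightarrow> 'x \<Rightarrow> 'x \<Rightarrow> 'x \<Rightarrow> ((Mlet \<times> 'x) \<times> (Mlet \<times> 'x)) set" where
  "tequiv X t l r = (Id_on (UNIV \<times> X) \<union> tbase t l r \<union> (tbase t l r)\<inverse>)\<^sup>+"

definition tcar :: "'x set \<Rightarrow> 'x \<Rightarrow> 'x \<Rightarrow> 'x \<Rightarrow> (Mlet \<times> 'x) set set" where
  "tcar X t l r = (UNIV \<times> X) // tequiv X t l r"

definition tel :: "'x set \<Rightarrow> 'x \<Rightarrow> 'x \<Rightarrow> 'x \<Rightarrow> Mlet \<Rightarrow> 'x \<Rightarrow> (Mlet \<times> 'x) set" where
  "tel X t l r m x = tequiv X t l r `` {(m, x)}"

definition pdist :: "('x \<Rightarrow> 'x \<Rightarrow> real) \<Rightarrow> Mlet \<times> 'x \<Rightarrow> Mlet \<times> 'x \<Rightarrow> real" where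
  "pdist d p q = (if fst p = fst q then d (snd p) (snd q) / 2 else 1)"

definition chain_ok :: "('p \<times> 'p) set \<Rightarrow> 'p set \<Rightarrow> 'p set \<Rightarrow> 'p set \<Rightarrow> ('p \<times> 'p) list \<Rightarrow> bool" where
  "chain_ok E Z P Q ch \<longleftrightarrow> ch \<noteq> [] \<and> set ch \<subseteq> Z \<times> Z \<and> fst (hd ch) \<in> P \<and> snd (last ch) \<in> Q \<and>
     (\<forall>i. Suc i < length ch \<longrightarrow> (snd (ch ! i), fst (ch ! Suc i)) \<in> E)"

definition tdist :: "'x set \<Rightarrow> ('x \<Rightarrow> 'x \<Rightarrow> real) \<Rightarrow> 'x \<Rightarrow> 'x \<Rightarrow> 'x \<Rightarrow>
    (Mlet \<times> 'x) set \<Rightarrow> (Mlet \<times> 'x) set \<Rightarrow> real" where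
  "tdist X d t l r P Q = Inf {sum_list (map (\<lambda>(p,q). pdist d p q) ch) | ch.
      chain_ok (tequiv X t l r) (UNIV \<times> X) P Q ch}"

definition tmap :: "'y set \<Rightarrow> 'y \<Rightarrow> 'y \<Rightarrow> 'y \<Rightarrow> ('x \<Rightarrow> 'y) \<Rightarrow> (Mlet \<times> 'x) set \<Rightarrow> (Mlet \<times> 'y) set" where
  "tmap Y t' l' r' f P = (let p = (SOME p. p \<in> P) in tel Y t' l' r' (fst p) (f (snd p)))"

section \<open>The initial algebra G as colimit of I \<rightarrow> FI \<rightarrow> F^2 I \<rightarrow> ...\<close>

text \<open>An element of F^n I is represented by a word m_0...m_{n-1} and z in {T,L,R}.\<close>
type_synonym word = "Mlet list \<times> Pt"

definition Wn :: "nat \<Rightarrow> word set" where "Wn n = {p. length (fst p) = n}"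
definition Tn :: "nat \<Rightarrow> word" where "Tn n = (replicate n A, T)"
definition Ln :: "nat \<Rightarrow> word" where "Ln n = (replicate n B, L)"
definition Rn :: "nat \<Rightarrow> word" where "Rn n = (replicate n C, R)"

text \<open>Pseudometric on level n (the metric of F^n I pulled back to words).\<close>
primrec wd :: "nat \<Rightarrow> word \<Rightarrow> word \<Rightarrow> real" where
  "wd 0 = (\<lambda>p q. if snd p = snd q then 0 else 1)"
| "wd (Suc n) = (\<lambda>p q. case p of (m # w, z) \<Rightarrow> (case q of (m' # w', z') \<Rightarrow>
       tdist (Wn n) (wd n) (Tn n) (Ln n) (Rn n)
         (tel (Wn n) (Tn n) (Ln n) (Rn n) m (w, z))
         (tel (Wn n) (Tn n) (Ln n) (Rn n) m' (w', z')) | _ \<Rightarrow> 0) | _ \<Rightarrow> 0)"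

text \<open>The map !: T \<mapsto> a\<otimes>T, L \<mapsto> b\<otimes>L, R \<mapsto> c\<otimes>R, and F^n ! on words.\<close>
fun bang_letter :: "Pt \<Rightarrow> Mlet" where
  "bang_letter T = A" | "bang_letter L = B" | "bang_letter R = C"

definition emb :: "word \<Rightarrow> word" where
  "emb p = (fst p @ [bang_letter (snd p)], snd p)"

definition lift_to :: "nat \<Rightarrow> word \<Rightarrow> word" where
  "lift_to N p = (emb ^^ (N - length (fst p))) p"

text \<open>Metric of the colimit G on representatives.\<close>
definition gd :: "word \<Rightarrow> word \<Rightarrow> real" where
  "gd p q = (let N = max (length (fst p)) (length (fst q)) in wd N (lift_to N p) (lift_to N q))"

section \<open>The Cauchy completion S of G\<close>

definition gcauchy :: "(nat \<Rightarrow> word) \<Rightarrow> bool" where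
  "gcauchy \<sigma> \<longleftrightarrow> (\<forall>\<epsilon>>0. \<exists>N. \<forall>m\<ge>N. \<forall>n\<ge>N. gd (\<sigma> m) (\<sigma> n) < \<epsilon>)"

definition Srel :: "((nat \<Rightarrow> word) \<times> (nat \<Rightarrow> word)) set" where
  "Srel = {(\<sigma>, \<tau>). gcauchy \<sigma> \<and> gcauchy \<tau> \<and> (\<lambda>k. gd (\<sigma> k) (\<tau> k)) \<longlonglongrightarrow> 0}"

definition Scar :: "(nat \<Rightarrow> word) set set" where
  "Scar = {\<sigma>. gcauchy \<sigma>} // Srel"

definition Scls :: "(nat \<Rightarrow> word) \<Rightarrow> (nat \<Rightarrow> word) set" where
  "Scls \<sigma> = Srel `` {\<sigma>}"

definition Sdist :: "(nat \<Rightarrow> word) set \<Rightarrow> (nat \<Rightarrow> word) set \<Rightarrow> real" where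
  "Sdist P Q = (let \<sigma> = (SOME \<sigma>. \<sigma> \<in> P); \<tau> = (SOME \<tau>. \<tau> \<in> Q) in lim (\<lambda>k. gd (\<sigma> k) (\<tau> k)))"

definition ST :: "(nat \<Rightarrow> word) set" where "ST = Scls (\<lambda>_. ([], T))"
definition SL :: "(nat \<Rightarrow> word) set" where "SL = Scls (\<lambda>_. ([], L))"
definition SR :: "(nat \<Rightarrow> word) set" where "SR = Scls (\<lambda>_. ([], R))"

text \<open>psi : M \<otimes> S \<rightarrow> S, the completion of g(m \<otimes> w) = m \<otimes> w (prefixing m).\<close>
definition psi :: "(Mlet \<times> (nat \<Rightarrow> word) set) set \<Rightarrow> (nat \<Rightarrow> word) set" where
  "psi P = (let p = (SOME p. p \<in> P); \<sigma> = (SOME \<sigma>. \<sigma> \<in> snd p)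
            in Scls (\<lambda>k. (fst p # fst (\<sigma> k), snd (\<sigma> k))))"

definition sgas :: "(nat \<Rightarrow> word) set \<Rightarrow> (Mlet \<times> (nat \<Rightarrow> word) set) set" where
  "sgas = inv_into (tcar Scar ST SL SR) psi"

end

theory Submission
  imports Defs
begin

text \<open>
  A point x of a coalgebra (X, e) unfolds into an itinerary: e x = m_0 \<otimes> x_1,
  e x_1 = m_1 \<otimes> x_2, and so on.  The words m_0 ... m_k z form a Cauchy sequence in G, since
  prefixing a letter halves distances, and its limit is f x.  Everything rests on an explicit
  formula for the quotient metric of M \<otimes> Y: two points in the same copy are at half their
  distance in Y, and between different copies a shortest chain either crosses the point the two
  copies share or runs through the third copy, from one of its corners to another.  With this
  formula the approximating metrics on F^n I are compatible, \<psi> is a bijection, and f is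
  continuous, because points that are close in X have first steps that lie in the same copy or
  near the shared point.  For uniqueness, the distance between g x and f x for two coalgebra
  morphisms g, f is half the distance at the next point of the itinerary, hence below 2^-n
  for every n.
\<close>

section \<open>The gluing relation of M \<otimes> Y\<close>

fun corner :: "'a \<Rightarrow> 'a \<Rightarrow> 'a \<Rightarrow> Pt \<Rightarrow> 'a" where
  "corner t l r T = t" | "corner t l r L = l" | "corner t l r R = r"

text \<open>For distinct letters m, n the copies m \<otimes> Y and n \<otimes> Y share exactly one point,
  m \<otimes> corner (glue_corner m n) = n \<otimes> corner (glue_corner n m), and third m n is the remaining
  letter.  The values for m = n are junk.\<close>

fun glue_corner :: "Mlet \<Rightarrow> Mlet \<Rightarrow> Pt" where
  "glue_corner A B = L" | "glue_corner B A = T" | "glue_corner A C = R"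
| "glue_corner C A = T" | "glue_corner B C = R" | "glue_corner C B = L"
| "glue_corner A A = T" | "glue_corner B B = T" | "glue_corner C C = T"

fun third :: "Mlet \<Rightarrow> Mlet \<Rightarrow> Mlet" where
  "third A B = C" | "third B A = C" | "third A C = B" | "third C A = B" | "third B C = A"
| "third C B = A" | "third A A = A" | "third B B = A" | "third C C = A"

definition glued :: "'a \<Rightarrow> 'a \<Rightarrow> 'a \<Rightarrow> Mlet \<times> 'a \<Rightarrow> Mlet \<times> 'a \<Rightarrow> bool" where
  "glued t l r p q \<longleftrightarrow> fst p \<noteq> fst q \<and> snd p = corner t l r (glue_corner (fst p) (fst q))
     \<and> snd q = corner t l r (glue_corner (fst q) (fst p))"

lemma corner_eq_iff:
  assumes "t \<noteq> l" "t \<noteq> r" "l \<noteq> r"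
  shows "corner t l r P = corner t l r Q \<longleftrightarrow> P = Q"
  using assms by (cases P; cases Q) auto

lemma corner_in: "t \<in> Y \<Longrightarrow> l \<in> Y \<Longrightarrow> r \<in> Y \<Longrightarrow> corner t l r P \<in> Y"
  by (cases P) simp_all

lemma corner_image: "corner (h t) (h l) (h r) P = h (corner t l r P)"
  by (cases P) simp_all

lemma glued_sym: "glued t l r p q \<Longrightarrow> glued t l r q p"
  unfolding glued_def by auto

lemma glued_left_unique:
  assumes "t \<noteq> l" "t \<noteq> r" "l \<noteq> r" "glued t l r p q" "glued t l r p' q"
  shows "p = p'"
proof -
  obtain m x n y m' x' where p: "p = (m,x)" and q: "q = (n,y)" and p': "p' = (m',x')"
    by (metis prod.collapse)
  have "glue_corner n m = glue_corner n m'" "m \<noteq> n" "m' \<noteq> n"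
    using assms(4,5) corner_eq_iff[OF assms(1-3)] unfolding p q p' glued_def by auto
  then have "m = m'" by (cases m; cases n; cases m') auto
  then show ?thesis using assms(4,5) unfolding p q p' glued_def by auto
qed

lemma glue_corner_bang_letter: "m \<noteq> bang_letter P \<Longrightarrow> glue_corner (bang_letter P) m \<noteq> P"
  by (cases P; cases m) simp_all

lemma tequiv_eq:
  assumes "t \<in> Y" "l \<in> Y" "r \<in> Y" "t \<noteq> l" "t \<noteq> r" "l \<noteq> r"
  shows "tequiv Y t l r = {(p,q). p \<in> UNIV \<times> Y \<and> q \<in> UNIV \<times> Y \<and> (p = q \<or> glued t l r p q)}"
    (is "_ = ?S")
proof -
  let ?G = "Id_on (UNIV \<times> Y) \<union> tbase t l r \<union> (tbase t l r)\<inverse>"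
  have "((m,x),(n,y)) \<in> ?G \<longleftrightarrow> ((m,x),(n,y)) \<in> ?S" for m x n y
    using assms by (cases m; cases n) (auto simp: tbase_def glued_def)
  then have G: "?G = ?S" by auto
  \<comment> \<open>every point lies in at most one glued pair, so the generating relation is transitive\<close>
  have "trans ?S"
  proof (rule transI)
    fix p q s assume "(p,q) \<in> ?S" "(q,s) \<in> ?S"
    then show "(p,s) \<in> ?S"
      using glued_left_unique[OF assms(4-6), of p q s] glued_sym[of t l r q s] by auto
  qed
  then show ?thesis unfolding tequiv_def G by (rule trancl_id)
qed

lemma equiv_tequiv:
  assumes "t \<in> Y" "l \<in> Y" "r \<in> Y" "t \<noteq> l" "t \<noteq> r" "l \<noteq> r"
  shows "equiv (UNIV \<times> Y) (tequiv Y t l r)"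
proof (rule equivI)
  show "trans (tequiv Y t l r)" unfolding tequiv_def by (rule trans_trancl)
  show "sym (tequiv Y t l r)" unfolding tequiv_eq[OF assms] sym_def by (auto simp: glued_def)
  show "refl_on (UNIV \<times> Y) (tequiv Y t l r)"
    unfolding tequiv_eq[OF assms] refl_on_def by auto
  show "tequiv Y t l r \<subseteq> (UNIV \<times> Y) \<times> UNIV \<times> Y"
    unfolding tequiv_eq[OF assms] by auto
qed

lemma mem_tel: "q \<in> tel Y t l r m x \<longleftrightarrow> ((m,x),q) \<in> tequiv Y t l r"
  by (simp add: tel_def)

lemma tel_in_tcar: "x \<in> Y \<Longrightarrow> tel Y t l r m x \<in> tcar Y t l r"
  unfolding tcar_def tel_def by (rule quotientI) simp

lemma tcarE:
  assumes "P \<in> tcar Y t l r"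
  obtains m x where "x \<in> Y" "P = tel Y t l r m x"
  using assms unfolding tcar_def tel_def by (auto elim!: quotientE)

lemma tel_eq_tel_if_tequiv:
  assumes "equiv (UNIV \<times> Y) (tequiv Y t l r)" "((m,x),(n,y)) \<in> tequiv Y t l r"
  shows "tel Y t l r m x = tel Y t l r n y"
  unfolding tel_def by (rule equiv_class_eq[OF assms])

lemma tel_of_mem:
  assumes "equiv (UNIV \<times> Y) (tequiv Y t l r)" "q \<in> tel Y t l r m x"
  shows "tel Y t l r (fst q) (snd q) = tel Y t l r m x"
  using assms tel_eq_tel_if_tequiv[OF assms(1), of m x "fst q" "snd q"] sym_def
  by (auto simp: mem_tel dest: equivE)

section \<open>The quotient metric of M \<otimes> Y\<close>

text \<open>The quotient distance tdist on M \<otimes> Y in closed form (lemma tdist_tel): the route between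
  different copies either crosses their shared point or runs through the third copy, between two
  of its corners.\<close>

definition qdist :: "('a \<Rightarrow> 'a \<Rightarrow> real) \<Rightarrow> 'a \<Rightarrow> 'a \<Rightarrow> 'a \<Rightarrow> Mlet \<times> 'a \<Rightarrow> Mlet \<times> 'a \<Rightarrow> real" where
  "qdist d t l r p q = (if fst p = fst q then d (snd p) (snd q) / 2 else
     min ((d (snd p) (corner t l r (glue_corner (fst p) (fst q)))
             + d (corner t l r (glue_corner (fst q) (fst p))) (snd q)) / 2)
         ((d (snd p) (corner t l r (glue_corner (fst p) (third (fst p) (fst q)))) + 1
             + d (corner t l r (glue_corner (fst q) (third (fst p) (fst q)))) (snd q)) / 2))"

lemma qdist_transfer:
  assumes "x \<in> Y" "y \<in> Y" "t \<in> Y" "l \<in> Y" "r \<in> Y" "\<forall>a\<in>Y. \<forall>b\<in>Y. d' (h a) (h b) = d a b"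
  shows "qdist d' (h t) (h l) (h r) (m, h x) (n, h y) = qdist d t l r (m,x) (n,y)"
  using assms corner_in[OF assms(3-5)] by (simp add: qdist_def corner_image)

text \<open>Pseudometrics, because the metric of F^n I pulled back to words gives distance 0 to the
  two words naming a glued point.\<close>

locale tripointed_pseudometric =
  fixes Y :: "'a set" and d :: "'a \<Rightarrow> 'a \<Rightarrow> real" and t l r :: 'a
  assumes corners_in: "t \<in> Y" "l \<in> Y" "r \<in> Y"
    and corners_distinct: "t \<noteq> l" "t \<noteq> r" "l \<noteq> r"
    and d_self: "x \<in> Y \<Longrightarrow> d x x = 0"
    and d_nonneg: "x \<in> Y \<Longrightarrow> y \<in> Y \<Longrightarrow> 0 \<le> d x y"
    and d_le_1: "x \<in> Y \<Longrightarrow> y \<in> Y \<Longrightarrow> d x y \<le> 1"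
    and d_sym: "x \<in> Y \<Longrightarrow> y \<in> Y \<Longrightarrow> d x y = d y x"
    and d_triangle: "x \<in> Y \<Longrightarrow> y \<in> Y \<Longrightarrow> z \<in> Y \<Longrightarrow> d x z \<le> d x y + d y z"
    and d_corners: "d t l = 1" "d t r = 1" "d l r = 1"

lemma tripointed_imp_pseudometric: "tripointed X d t l r \<Longrightarrow> tripointed_pseudometric X d t l r"
  unfolding tripointed_def metric_on_def by unfold_locales auto

context tripointed_pseudometric
begin

lemma corner_in_Y: "corner t l r P \<in> Y"
  using corners_in by (rule corner_in)

lemma d_corner_corner: "P \<noteq> Q \<Longrightarrow> d (corner t l r P) (corner t l r Q) = 1"
  using d_corners d_sym[of t l] d_sym[of t r] d_sym[of l r] corners_in
  by (cases P; cases Q) auto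

lemma tequiv_char:
  "tequiv Y t l r = {(p,q). p \<in> UNIV \<times> Y \<and> q \<in> UNIV \<times> Y \<and> (p = q \<or> glued t l r p q)}"
  using tequiv_eq corners_in corners_distinct .

lemma equiv: "equiv (UNIV \<times> Y) (tequiv Y t l r)"
  using equiv_tequiv corners_in corners_distinct .

lemma self_in_tel: "x \<in> Y \<Longrightarrow> (m,x) \<in> tel Y t l r m x"
  unfolding mem_tel tequiv_char by auto

lemma tel_outer_corner: "tel Y t l r (bang_letter P) (corner t l r P) = {(bang_letter P, corner t l r P)}"
proof -
  have "\<not> glued t l r (bang_letter P, corner t l r P) q" for q
    unfolding glued_def
    using glue_corner_bang_letter[of "fst q" P] corner_eq_iff[OF corners_distinct] by auto
  then have "q = (bang_letter P, corner t l r P)"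
    if "q \<in> tel Y t l r (bang_letter P) (corner t l r P)" for q
    using that unfolding mem_tel tequiv_char by auto
  then show ?thesis using self_in_tel[OF corner_in_Y] by blast
qed

lemma qdist_same [simp]: "qdist d t l r (m,x) (m,y) = d x y / 2"
  by (simp add: qdist_def)

lemma qdist_diff: "m \<noteq> n \<Longrightarrow> qdist d t l r (m,x) (n,y) =
     min ((d x (corner t l r (glue_corner m n)) + d (corner t l r (glue_corner n m)) y) / 2)
         ((d x (corner t l r (glue_corner m (third m n))) + 1
            + d (corner t l r (glue_corner n (third m n))) y) / 2)"
  by (simp add: qdist_def)

lemma qdist_nonneg: "x \<in> Y \<Longrightarrow> y \<in> Y \<Longrightarrow> 0 \<le> qdist d t l r (m,x) (n,y)"
  using d_nonneg corner_in_Y by (auto simp: qdist_def)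

lemma qdist_le_1:
  assumes "x \<in> Y" "y \<in> Y"
  shows "qdist d t l r (m,x) (n,y) \<le> 1"
proof (cases "m = n")
  case True
  then show ?thesis using d_le_1[OF assms] d_nonneg[OF assms] by simp
next
  case False
  have "d x (corner t l r (glue_corner m n)) \<le> 1" "d (corner t l r (glue_corner n m)) y \<le> 1"
    using d_le_1 assms corner_in_Y by auto
  then show ?thesis using False by (simp add: qdist_diff min_le_iff_disj)
qed

lemma qdist_self: "x \<in> Y \<Longrightarrow> qdist d t l r (m,x) (m,x) = 0"
  using d_self by simp

lemma qdist_sym: "x \<in> Y \<Longrightarrow> y \<in> Y \<Longrightarrow> qdist d t l r (m,x) (n,y) = qdist d t l r (n,y) (m,x)"
  using d_sym[of x y] d_sym[OF _ corners_in(1)] d_sym[OF _ corners_in(2)] d_sym[OF _ corners_in(3)]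
  by (cases m; cases n; simp add: qdist_def; argo)

lemma qdist_lipschitz:
  assumes "x \<in> Y" "y \<in> Y" "y' \<in> Y"
  shows "qdist d t l r (m,x) (n,y) \<le> qdist d t l r (m,x) (n',y') + pdist d (n',y') (n,y)"
proof (cases "n = n'")
  case True
  have "d c y \<le> d c y' + d y' y" if "c \<in> Y" for c using d_triangle[OF that assms(3) assms(2)] .
  note tri = this[OF corners_in(1)] this[OF corners_in(2)] this[OF corners_in(3)] this[OF assms(1)]
  show ?thesis using True tri by (cases m; cases n; simp add: qdist_def pdist_def; argo)
next
  case False
  then show ?thesis using qdist_le_1[OF assms(1,2), of m n] qdist_nonneg[OF assms(1,3), of m n']
    by (simp add: pdist_def)
qed

lemma qdist_glued:
  assumes "x \<in> Y" "glued t l r q q'"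
  shows "qdist d t l r (m,x) q = qdist d t l r (m,x) q'"
proof -
  obtain n y n' y' where q: "q = (n,y)" and q': "q' = (n',y')" by fastforce
  have g: "n \<noteq> n'" "y = corner t l r (glue_corner n n')" "y' = corner t l r (glue_corner n' n)"
    using assms(2) unfolding q q' glued_def by auto
  note c = d_corners d_sym[OF corners_in(1,2)] d_sym[OF corners_in(1,3)] d_sym[OF corners_in(2,3)]
     d_self[OF corners_in(1)] d_self[OF corners_in(2)] d_self[OF corners_in(3)]
     d_le_1[OF assms(1) corners_in(1)] d_le_1[OF assms(1) corners_in(2)]
     d_le_1[OF assms(1) corners_in(3)] d_nonneg[OF assms(1) corners_in(1)]
     d_nonneg[OF assms(1) corners_in(2)] d_nonneg[OF assms(1) corners_in(3)]
  show ?thesis unfolding q q' g using g(1) c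
    by (cases m; cases n; cases n'; simp add: qdist_def; argo)
qed

lemma qdist_tequiv:
  assumes "x \<in> Y" "(q,q') \<in> tequiv Y t l r"
  shows "qdist d t l r (m,x) q = qdist d t l r (m,x) q'"
  using assms qdist_glued unfolding tequiv_char by auto

lemma qdist_chain_bound:
  assumes "set ch \<subseteq> (UNIV \<times> Y) \<times> (UNIV \<times> Y)" "ch \<noteq> []"
    "\<forall>i. Suc i < length ch \<longrightarrow> (snd (ch!i), fst (ch ! Suc i)) \<in> tequiv Y t l r" "x \<in> Y"
  shows "qdist d t l r (m,x) (snd (last ch))
           \<le> qdist d t l r (m,x) (fst (hd ch)) + sum_list (map (\<lambda>(p,q). pdist d p q) ch)"
  using assms
proof (induction ch)
  case Nil then show ?case by simp
next
  case (Cons a ch)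
  obtain n y n' y' where a: "a = ((n',y'),(n,y))" by (metis prod.collapse)
  have "y \<in> Y" "y' \<in> Y" using Cons.prems(1) a by auto
  then have link: "qdist d t l r (m,x) (snd a) \<le> qdist d t l r (m,x) (fst a) + pdist d (fst a) (snd a)"
    using qdist_lipschitz[OF \<open>x \<in> Y\<close>] a by simp
  show ?case
  proof (cases "ch = []")
    case True then show ?thesis using link by (simp add: case_prod_beta)
  next
    case False
    have "(snd a, fst (hd ch)) \<in> tequiv Y t l r"
      using Cons.prems(3) False by (cases ch) auto
    then have "qdist d t l r (m,x) (fst (hd ch)) = qdist d t l r (m,x) (snd a)"
      using qdist_tequiv[OF \<open>x \<in> Y\<close>] by simp
    moreover have "\<forall>i. Suc i < length ch \<longrightarrow> (snd (ch ! i), fst (ch ! Suc i)) \<in> tequiv Y t l r"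
      using Cons.prems(3) by force
    then have "qdist d t l r (m,x) (snd (last ch))
        \<le> qdist d t l r (m,x) (fst (hd ch)) + sum_list (map (\<lambda>(p,q). pdist d p q) ch)"
      using Cons.IH Cons.prems(1,4) False by simp
    moreover have "sum_list (map (\<lambda>(p,q). pdist d p q) (a # ch))
        = pdist d (fst a) (snd a) + sum_list (map (\<lambda>(p,q). pdist d p q) ch)"
      by (cases a) simp
    ultimately show ?thesis using link False by simp
  qed
qed

lemma qdist_le_chain:
  assumes "x \<in> Y" "chain_ok (tequiv Y t l r) (UNIV \<times> Y) (tel Y t l r n y) (tel Y t l r k z) ch"
  shows "qdist d t l r (m,x) (k,z) \<le> qdist d t l r (m,x) (n,y) + sum_list (map (\<lambda>(p,q). pdist d p q) ch)"
proof -
  have "((n,y), fst (hd ch)) \<in> tequiv Y t l r" "((k,z), snd (last ch)) \<in> tequiv Y t l r"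
    using assms(2) unfolding chain_ok_def mem_tel by auto
  then show ?thesis
    using qdist_chain_bound[OF _ _ _ assms(1)] assms(2) qdist_tequiv[OF assms(1)]
    unfolding chain_ok_def by metis
qed

lemma tdist_le_chain:
  assumes "chain_ok (tequiv Y t l r) (UNIV \<times> Y) P Q ch"
  shows "tdist Y d t l r P Q \<le> sum_list (map (\<lambda>(p,q). pdist d p q) ch)"
  unfolding tdist_def
proof (rule cInf_lower)
  show "bdd_below {sum_list (map (\<lambda>(p,q). pdist d p q) ch) | ch.
      chain_ok (tequiv Y t l r) (UNIV \<times> Y) P Q ch}"
  proof (rule bdd_belowI)
    fix s assume "s \<in> {sum_list (map (\<lambda>(p,q). pdist d p q) ch) | ch.
      chain_ok (tequiv Y t l r) (UNIV \<times> Y) P Q ch}"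
    then show "0 \<le> s"
      by (force simp: chain_ok_def pdist_def intro!: sum_list_nonneg dest: d_nonneg)
  qed
qed (use assms in blast)

lemma tdist_tel_greatest:
  assumes "x \<in> Y" "y \<in> Y"
    and "\<And>ch. chain_ok (tequiv Y t l r) (UNIV \<times> Y) (tel Y t l r m x) (tel Y t l r n y) ch
           \<Longrightarrow> b \<le> sum_list (map (\<lambda>(p,q). pdist d p q) ch)"
  shows "b \<le> tdist Y d t l r (tel Y t l r m x) (tel Y t l r n y)"
proof -
  have "chain_ok (tequiv Y t l r) (UNIV \<times> Y) (tel Y t l r m x) (tel Y t l r n y) [((m,x),(n,y))]"
    using self_in_tel assms(1,2) by (simp add: chain_ok_def)
  then show ?thesis unfolding tdist_def by (intro cInf_greatest) (use assms(3) in blast)+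
qed

lemma tdist_tel:
  assumes "x \<in> Y" "y \<in> Y"
  shows "tdist Y d t l r (tel Y t l r m x) (tel Y t l r n y) = qdist d t l r (m,x) (n,y)"
proof (rule antisym)
  let ?P = "tel Y t l r m x" and ?Q = "tel Y t l r n y"
  have mx: "(m,x) \<in> ?P" and ny: "(n,y) \<in> ?Q" using self_in_tel assms by auto
  show "qdist d t l r (m,x) (n,y) \<le> tdist Y d t l r ?P ?Q"
    using tdist_tel_greatest[OF assms] qdist_le_chain[OF assms(1)] qdist_self[OF assms(1)]
    by (metis add_0)
  show "tdist Y d t l r ?P ?Q \<le> qdist d t l r (m,x) (n,y)"
  proof (cases "m = n")
    case True
    have "chain_ok (tequiv Y t l r) (UNIV \<times> Y) ?P ?Q [((m,x),(n,y))]"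
      using mx ny assms by (simp add: chain_ok_def)
    then show ?thesis using tdist_le_chain True by (fastforce simp: pdist_def)
  next
    case False
    let ?c = "corner t l r (glue_corner m n)" and ?c' = "corner t l r (glue_corner n m)"
    let ?k = "third m n"
    let ?c1 = "corner t l r (glue_corner m ?k)" and ?c2 = "corner t l r (glue_corner ?k m)"
      and ?c3 = "corner t l r (glue_corner ?k n)" and ?c4 = "corner t l r (glue_corner n ?k)"
    have k: "?k \<noteq> m" "?k \<noteq> n" "glue_corner ?k m \<noteq> glue_corner ?k n"
      using False by (cases m; cases n; simp)+
    have "((m,?c),(n,?c')) \<in> tequiv Y t l r" "((m,?c1),(?k,?c2)) \<in> tequiv Y t l r"
      "((?k,?c3),(n,?c4)) \<in> tequiv Y t l r"
      unfolding tequiv_char glued_def using False k corner_in_Y by auto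
    then have "chain_ok (tequiv Y t l r) (UNIV \<times> Y) ?P ?Q [((m,x),(m,?c)), ((n,?c'),(n,y))]"
      "chain_ok (tequiv Y t l r) (UNIV \<times> Y) ?P ?Q
         [((m,x),(m,?c1)), ((?k,?c2),(?k,?c3)), ((n,?c4),(n,y))]"
      unfolding chain_ok_def using mx ny assms corner_in_Y by (auto simp: less_Suc_eq)
    then have "tdist Y d t l r ?P ?Q \<le> (d x ?c + d ?c' y) / 2"
      "tdist Y d t l r ?P ?Q \<le> (d x ?c1 + 1 + d ?c4 y) / 2"
      using tdist_le_chain d_corner_corner[OF k(3)]
      by (fastforce simp: pdist_def add_divide_distrib)+
    then show ?thesis using False by (simp add: qdist_diff)
  qed
qed

lemma qdist_triangle:
  assumes "x \<in> Y" "y \<in> Y" "z \<in> Y"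
  shows "qdist d t l r (m,x) (k,z) \<le> qdist d t l r (m,x) (n,y) + qdist d t l r (n,y) (k,z)"
proof -
  have "qdist d t l r (m,x) (k,z) - qdist d t l r (m,x) (n,y)
      \<le> tdist Y d t l r (tel Y t l r n y) (tel Y t l r k z)"
  proof (rule tdist_tel_greatest[OF assms(2,3)])
    fix ch assume "chain_ok (tequiv Y t l r) (UNIV \<times> Y) (tel Y t l r n y) (tel Y t l r k z) ch"
    from qdist_le_chain[OF assms(1) this, of m]
    show "qdist d t l r (m,x) (k,z) - qdist d t l r (m,x) (n,y)
        \<le> sum_list (map (\<lambda>(p,q). pdist d p q) ch)" by simp
  qed
  then show ?thesis using tdist_tel[OF assms(2,3)] by simp
qed

text \<open>A chain through the third copy costs at least 1/2, so below that only the route through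
  the shared point counts.\<close>

lemma qdist_diff_less:
  assumes "x \<in> Y" "y \<in> Y" "m \<noteq> n" "qdist d t l r (m,x) (n,y) < \<eta>" "\<eta> \<le> 1/2"
  shows "d (corner t l r (glue_corner m n)) x < 2 * \<eta>" "d (corner t l r (glue_corner n m)) y < 2 * \<eta>"
proof -
  let ?c = "corner t l r (glue_corner m n)" and ?c' = "corner t l r (glue_corner n m)"
  have "0 \<le> d x (corner t l r (glue_corner m (third m n)))"
    "0 \<le> d (corner t l r (glue_corner n (third m n))) y"
    using d_nonneg corner_in_Y assms(1,2) by auto
  then have direct: "(d x ?c + d ?c' y) / 2 < \<eta>"
    using assms(3-5) by (simp add: qdist_diff min_def split: if_splits)
  have "0 \<le> d x ?c" "0 \<le> d ?c' y" "d x ?c = d ?c x"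
    using d_nonneg d_sym corner_in_Y assms(1,2) by auto
  with direct show "d ?c x < 2 * \<eta>" "d ?c' y < 2 * \<eta>" by argo+
qed

end

section \<open>The colimit G on words\<close>

definition prepend :: "Mlet \<Rightarrow> word \<Rightarrow> word" where
  "prepend m p = (m # fst p, snd p)"

lemma length_prepend [simp]: "length (fst (prepend m p)) = Suc (length (fst p))"
  by (simp add: prepend_def)

lemma length_emb [simp]: "length (fst (emb p)) = Suc (length (fst p))"
  by (simp add: emb_def)

lemma emb_prepend: "emb (prepend m p) = prepend m (emb p)"
  by (simp add: emb_def prepend_def)

lemma funpow_emb_prepend: "(emb ^^ k) (prepend m p) = prepend m ((emb ^^ k) p)"
  by (induction k) (simp_all add: emb_prepend)

lemma length_funpow_emb: "length (fst ((emb ^^ k) p)) = length (fst p) + k"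
  by (induction k) simp_all

lemma funpow_emb_corner: "(emb ^^ k) ([], P) = (replicate k (bang_letter P), P)"
  by (induction k) (simp_all add: emb_def replicate_append_same)

lemma lift_to_in_Wn: "length (fst p) \<le> N \<Longrightarrow> lift_to N p \<in> Wn N"
  by (simp add: Wn_def lift_to_def length_funpow_emb)

lemma lift_to_prepend: "length (fst p) \<le> N \<Longrightarrow> lift_to (Suc N) (prepend m p) = prepend m (lift_to N p)"
  by (simp add: lift_to_def funpow_emb_prepend)

lemma lift_to_Suc: "length (fst p) \<le> N \<Longrightarrow> lift_to (Suc N) p = emb (lift_to N p)"
  by (simp add: lift_to_def Suc_diff_le)

lemma lift_to_length: "lift_to (length (fst p)) p = p"
  by (simp add: lift_to_def)

lemma lift_to_corners: "lift_to N ([],T) = Tn N" "lift_to N ([],L) = Ln N" "lift_to N ([],R) = Rn N"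
  by (simp_all add: lift_to_def funpow_emb_corner Tn_def Ln_def Rn_def)

lemma corners_Suc: "Tn (Suc n) = prepend A (Tn n)" "Ln (Suc n) = prepend B (Ln n)"
    "Rn (Suc n) = prepend C (Rn n)"
  by (simp_all add: Tn_def Ln_def Rn_def prepend_def)

lemma emb_corners: "emb (Tn n) = Tn (Suc n)" "emb (Ln n) = Ln (Suc n)" "emb (Rn n) = Rn (Suc n)"
  by (simp_all add: Tn_def Ln_def Rn_def emb_def replicate_append_same)

lemma corners_in_Wn: "Tn n \<in> Wn n" "Ln n \<in> Wn n" "Rn n \<in> Wn n"
  by (simp_all add: Tn_def Ln_def Rn_def Wn_def)

lemma Wn_SucE:
  assumes "p \<in> Wn (Suc n)"
  obtains m p' where "p = prepend m p'" "p' \<in> Wn n"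
  using assms by (cases p; cases "fst p") (auto simp: Wn_def prepend_def)

lemma emb_in_Wn: "p \<in> Wn n \<Longrightarrow> emb p \<in> Wn (Suc n)"
  by (simp add: Wn_def)

lemma wd_Suc_prepend: "wd (Suc n) (prepend m p) (prepend m' q) =
   tdist (Wn n) (wd n) (Tn n) (Ln n) (Rn n) (tel (Wn n) (Tn n) (Ln n) (Rn n) m p)
      (tel (Wn n) (Tn n) (Ln n) (Rn n) m' q)"
  by (cases p; cases q) (simp add: prepend_def)

declare wd.simps(2) [simp del]

lemma tripointed_pseudometric_wd: "tripointed_pseudometric (Wn n) (wd n) (Tn n) (Ln n) (Rn n)"
proof (induction n)
  case 0
  show ?case by unfold_locales (auto simp: Tn_def Ln_def Rn_def Wn_def)
next
  case (Suc n)
  interpret tripointed_pseudometric "Wn n" "wd n" "Tn n" "Ln n" "Rn n" by (rule Suc.IH)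
  have wd: "wd (Suc n) (prepend m p) (prepend m' q) = qdist (wd n) (Tn n) (Ln n) (Rn n) (m,p) (m',q)"
    if "p \<in> Wn n" "q \<in> Wn n" for m m' p q
    unfolding wd_Suc_prepend using tdist_tel[OF that] .
  show ?case
  proof unfold_locales
    fix x y z assume "x \<in> Wn (Suc n)" "y \<in> Wn (Suc n)" "z \<in> Wn (Suc n)"
    then obtain m p m' q k s where "x = prepend m p" "y = prepend m' q" "z = prepend k s"
      and "p \<in> Wn n" "q \<in> Wn n" "s \<in> Wn n"
      by (metis Wn_SucE)
    then show "wd (Suc n) x x = 0" "0 \<le> wd (Suc n) x y" "wd (Suc n) x y \<le> 1"
      "wd (Suc n) x y = wd (Suc n) y x" "wd (Suc n) x z \<le> wd (Suc n) x y + wd (Suc n) y z"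
      using wd qdist_self qdist_nonneg qdist_le_1 qdist_sym[of p q] qdist_triangle[of p q s]
      by simp_all
  next
    show "wd (Suc n) (Tn (Suc n)) (Ln (Suc n)) = 1" "wd (Suc n) (Tn (Suc n)) (Rn (Suc n)) = 1"
      "wd (Suc n) (Ln (Suc n)) (Rn (Suc n)) = 1"
      unfolding corners_Suc using wd corners_in d_corners d_self d_sym[OF corners_in(2,3)]
        d_sym[OF corners_in(1,2)] d_sym[OF corners_in(1,3)]
      by (simp_all add: qdist_def)
  qed (auto simp: Tn_def Ln_def Rn_def Wn_def)
qed

lemma wd_Suc_qdist:
  "p \<in> Wn n \<Longrightarrow> q \<in> Wn n \<Longrightarrow>
    wd (Suc n) (prepend m p) (prepend m' q) = qdist (wd n) (Tn n) (Ln n) (Rn n) (m,p) (m',q)"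
  unfolding wd_Suc_prepend by (rule tripointed_pseudometric.tdist_tel[OF tripointed_pseudometric_wd])

lemma wd_emb: "p \<in> Wn n \<Longrightarrow> q \<in> Wn n \<Longrightarrow> wd (Suc n) (emb p) (emb q) = wd n p q"
proof (induction n arbitrary: p q)
  case 0
  obtain z z' where p: "p = ([], z)" and q: "q = ([], z')"
    using 0 by (cases p; cases q) (auto simp: Wn_def)
  have "emb ([], Z) = prepend (bang_letter Z) ([], Z)" and "([], Z) \<in> Wn 0" for Z
    by (simp_all add: emb_def prepend_def Wn_def)
  then show ?case unfolding p q using wd_Suc_qdist
    by (cases z; cases z') (simp_all add: qdist_def Tn_def Ln_def Rn_def)
next
  case (Suc k)
  obtain m p' m' q' where p: "p = prepend m p'" "p' \<in> Wn k" and q: "q = prepend m' q'" "q' \<in> Wn k"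
    using Suc.prems by (metis Wn_SucE)
  have "wd (Suc (Suc k)) (emb p) (emb q)
      = qdist (wd (Suc k)) (emb (Tn k)) (emb (Ln k)) (emb (Rn k)) (m, emb p') (m', emb q')"
    unfolding p q emb_prepend emb_corners using wd_Suc_qdist emb_in_Wn p q by blast
  also have "\<dots> = qdist (wd k) (Tn k) (Ln k) (Rn k) (m, p') (m', q')"
    by (rule qdist_transfer[OF p(2) q(2) corners_in_Wn]) (use Suc.IH in blast)
  also have "\<dots> = wd (Suc k) p q" unfolding p q using wd_Suc_qdist p q by simp
  finally show ?case .
qed

lemma wd_lift_to_mono:
  assumes "length (fst p) \<le> N" "length (fst q) \<le> N" "N \<le> M"
  shows "wd M (lift_to M p) (lift_to M q) = wd N (lift_to N p) (lift_to N q)"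
  using assms(3)
proof (induction M rule: dec_induct)
  case (step M)
  then have "length (fst p) \<le> M" "length (fst q) \<le> M" using assms by auto
  then show ?case using step.IH lift_to_Suc wd_emb lift_to_in_Wn by simp
qed (rule refl)

lemma gd_eq_wd:
  assumes "length (fst p) \<le> N" "length (fst q) \<le> N"
  shows "gd p q = wd N (lift_to N p) (lift_to N q)"
  unfolding gd_def Let_def using assms by (intro wd_lift_to_mono[symmetric]) auto

lemma gd_self [simp]: "gd p p = 0"
  using tripointed_pseudometric.d_self[OF tripointed_pseudometric_wd lift_to_in_Wn[OF le_refl]]
  by (simp add: gd_def)

lemma gd_sym: "gd p q = gd q p"
  using tripointed_pseudometric.d_sym[OF tripointed_pseudometric_wd lift_to_in_Wn lift_to_in_Wn]
  by (simp add: gd_def Let_def max.commute)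

lemma gd_nonneg: "0 \<le> gd p q"
  using tripointed_pseudometric.d_nonneg[OF tripointed_pseudometric_wd lift_to_in_Wn lift_to_in_Wn]
  by (simp add: gd_def Let_def)

lemma gd_le_1: "gd p q \<le> 1"
  using tripointed_pseudometric.d_le_1[OF tripointed_pseudometric_wd lift_to_in_Wn lift_to_in_Wn]
  by (simp add: gd_def Let_def)

lemma gd_triangle: "gd p s \<le> gd p q + gd q s"
proof -
  define N where "N = max (length (fst p)) (max (length (fst q)) (length (fst s)))"
  have N: "length (fst p) \<le> N" "length (fst q) \<le> N" "length (fst s) \<le> N"
    by (auto simp: N_def)
  show ?thesis unfolding gd_eq_wd[OF N(1,2)] gd_eq_wd[OF N(1,3)] gd_eq_wd[OF N(2,3)]
    by (rule tripointed_pseudometric.d_triangle[OF tripointed_pseudometric_wd lift_to_in_Wn[OF N(1)]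
          lift_to_in_Wn[OF N(2)] lift_to_in_Wn[OF N(3)]])
qed

lemma gd_diff_le: "\<bar>gd p' q' - gd p q\<bar> \<le> gd p p' + gd q q'"
  using gd_triangle[of p' q' p] gd_triangle[of p q' q] gd_triangle[of p q p'] gd_triangle[of p' q q']
    gd_sym[of p p'] gd_sym[of q q'] by linarith

lemma gd_corners: "P \<noteq> Q \<Longrightarrow> gd ([],P) ([],Q) = 1"
  by (cases P; cases Q) (simp_all add: gd_def lift_to_def)

lemma gd_emb: "gd (emb p) p = 0"
proof -
  have "gd (emb p) p = wd (Suc (length (fst p))) (emb p) (emb p)"
    using gd_eq_wd[of "emb p" "Suc (length (fst p))" p] lift_to_length[of "emb p"]
      lift_to_Suc[of p] lift_to_length[of p] by simp
  then show ?thesis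
    using tripointed_pseudometric.d_self[OF tripointed_pseudometric_wd] by (simp add: Wn_def)
qed

lemma gd_funpow_emb: "gd ((emb ^^ k) p) p = 0"
proof (induction k)
  case (Suc k)
  then show ?case
    using gd_triangle[of "(emb ^^ Suc k) p" p "(emb ^^ k) p"] gd_emb gd_nonneg[of "(emb ^^ Suc k) p" p]
    by simp
qed simp

lemma gd_emb_emb: "gd (emb p) (emb q) = gd p q"
  using gd_diff_le[of "emb p" "emb q" p q] gd_emb gd_sym by (simp add: abs_le_iff)

lemma corner_words: "corner ([],T) ([],L) ([],R) P = ([],P)"
  by (cases P) simp_all

lemma gd_prepend: "gd (prepend m p) (prepend n q) = qdist gd ([],T) ([],L) ([],R) (m,p) (n,q)"
proof -
  define N where "N = max (length (fst p)) (length (fst q))"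
  define V where "V = {p::word. length (fst p) \<le> N}"
  have pq: "p \<in> V" "q \<in> V" and corners: "([],T) \<in> V" "([],L) \<in> V" "([],R) \<in> V"
    by (auto simp: N_def V_def)
  have "gd (prepend m p) (prepend n q) = wd (Suc N) (prepend m (lift_to N p)) (prepend n (lift_to N q))"
    using gd_eq_wd[of "prepend m p" "Suc N" "prepend n q"] lift_to_prepend pq by (simp add: V_def)
  also have "\<dots> = qdist (wd N) (lift_to N ([],T)) (lift_to N ([],L)) (lift_to N ([],R))
      (m, lift_to N p) (n, lift_to N q)"
    using wd_Suc_qdist lift_to_in_Wn pq by (simp add: V_def lift_to_corners)
  also have "\<dots> = qdist gd ([],T) ([],L) ([],R) (m,p) (n,q)"
    by (rule qdist_transfer[OF pq corners]) (simp add: V_def gd_eq_wd)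
  finally show ?thesis .
qed

lemma gd_prepend_same: "gd (prepend m p) (prepend m q) = gd p q / 2"
  by (simp add: gd_prepend qdist_def)

lemma gd_prepend_diff:
  "m \<noteq> n \<Longrightarrow> gd (prepend m p) (prepend n q) = min ((gd p ([], glue_corner m n) + gd ([], glue_corner n m) q) / 2)
      ((gd p ([], glue_corner m (third m n)) + 1 + gd ([], glue_corner n (third m n)) q) / 2)"
  by (simp add: gd_prepend qdist_def corner_words)

lemma gd_prepend_glued: "m \<noteq> n \<Longrightarrow> gd (prepend m ([], glue_corner m n)) (prepend n ([], glue_corner n m)) = 0"
  using gd_prepend_diff gd_nonneg[of "([], glue_corner m n)" "([], glue_corner m (third m n))"]
    gd_nonneg[of "([], glue_corner n (third m n))" "([], glue_corner n m)"]
  by (simp add: min_def)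

section \<open>The completion S and the structure map \<psi>\<close>

lemma gcauchy_const: "gcauchy (\<lambda>_. p)"
  by (simp add: gcauchy_def)

lemma gcauchy_subseq:
  assumes "gcauchy \<sigma>" "strict_mono \<phi>"
  shows "gcauchy (\<sigma> \<circ> \<phi>)"
  unfolding gcauchy_def
proof (intro allI impI)
  fix e :: real assume "0 < e"
  then obtain N where N: "\<forall>m\<ge>N. \<forall>n\<ge>N. gd (\<sigma> m) (\<sigma> n) < e"
    using assms(1) unfolding gcauchy_def by blast
  show "\<exists>N. \<forall>i\<ge>N. \<forall>j\<ge>N. gd ((\<sigma> \<circ> \<phi>) i) ((\<sigma> \<circ> \<phi>) j) < e"
  proof (intro exI[of _ N] allI impI)
    fix i j assume "N \<le> i" "N \<le> j"
    then have "N \<le> \<phi> i" "N \<le> \<phi> j" using seq_suble[OF assms(2)] le_trans by blast+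
    then show "gd ((\<sigma> \<circ> \<phi>) i) ((\<sigma> \<circ> \<phi>) j) < e" using N by simp
  qed
qed

lemma Srel_iff: "(\<sigma>,\<tau>) \<in> Srel \<longleftrightarrow> gcauchy \<sigma> \<and> gcauchy \<tau> \<and> (\<lambda>k. gd (\<sigma> k) (\<tau> k)) \<longlonglongrightarrow> 0"
  by (simp add: Srel_def)

lemma gd_tendsto_0_trans:
  assumes "(\<lambda>k. gd (a k) (b k)) \<longlonglongrightarrow> 0" "(\<lambda>k. gd (b k) (c k)) \<longlonglongrightarrow> 0"
  shows "(\<lambda>k. gd (a k) (c k)) \<longlonglongrightarrow> 0"
proof (rule real_tendsto_sandwich[of "\<lambda>_. 0" _ _ "\<lambda>k. gd (a k) (b k) + gd (b k) (c k)"])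
  show "(\<lambda>k. gd (a k) (b k) + gd (b k) (c k)) \<longlonglongrightarrow> 0" using tendsto_add[OF assms] by simp
qed (simp_all add: gd_nonneg gd_triangle)

lemma Srel_trans: "(\<sigma>,\<tau>) \<in> Srel \<Longrightarrow> (\<tau>,\<rho>) \<in> Srel \<Longrightarrow> (\<sigma>,\<rho>) \<in> Srel"
  unfolding Srel_iff using gd_tendsto_0_trans by blast

lemma equiv_Srel: "equiv {\<sigma>. gcauchy \<sigma>} Srel"
proof (rule equivI)
  show "refl_on {\<sigma>. gcauchy \<sigma>} Srel" "Srel \<subseteq> {\<sigma>. gcauchy \<sigma>} \<times> {\<sigma>. gcauchy \<sigma>}"
    by (auto simp: refl_on_def Srel_def)
  show "sym Srel" unfolding sym_def Srel_iff by (simp add: gd_sym)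
  show "trans Srel" unfolding trans_def using Srel_trans by blast
qed

lemma Scls_eq_iff: "gcauchy \<sigma> \<Longrightarrow> gcauchy \<tau> \<Longrightarrow> Scls \<sigma> = Scls \<tau> \<longleftrightarrow> (\<sigma>,\<tau>) \<in> Srel"
  unfolding Scls_def using equiv_class_eq_iff[OF equiv_Srel] by auto

lemma Scls_eqI: "(\<sigma>,\<tau>) \<in> Srel \<Longrightarrow> Scls \<sigma> = Scls \<tau>"
  using Scls_eq_iff by (auto simp: Srel_def)

lemma Scls_in_Scar: "gcauchy \<sigma> \<Longrightarrow> Scls \<sigma> \<in> Scar"
  unfolding Scls_def Scar_def by (rule quotientI) simp

lemma ScarE:
  assumes "Q \<in> Scar"
  obtains \<sigma> where "gcauchy \<sigma>" "Q = Scls \<sigma>"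
  using assms unfolding Scar_def Scls_def by (auto elim!: quotientE)

lemma Srel_some_in_Scls: "gcauchy \<sigma> \<Longrightarrow> (\<sigma>, SOME \<rho>. \<rho> \<in> Scls \<sigma>) \<in> Srel"
  using someI[of "\<lambda>\<rho>. \<rho> \<in> Scls \<sigma>" \<sigma>] by (simp add: Scls_def Srel_def)

lemma Srel_subseq:
  assumes "gcauchy \<sigma>" "strict_mono \<phi>"
  shows "(\<sigma>, \<sigma> \<circ> \<phi>) \<in> Srel"
proof -
  have "\<exists>N. \<forall>k\<ge>N. norm (gd (\<sigma> k) (\<sigma> (\<phi> k)) - 0) < e" if "0 < e" for e
  proof -
    obtain N where N: "\<forall>m\<ge>N. \<forall>n\<ge>N. gd (\<sigma> m) (\<sigma> n) < e"
      using assms(1) \<open>0 < e\<close> unfolding gcauchy_def by blast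
    have "N \<le> \<phi> k" if "N \<le> k" for k using seq_suble[OF assms(2), of k] that by linarith
    then show ?thesis using N gd_nonneg by (intro exI[of _ N]) simp
  qed
  then show ?thesis using assms gcauchy_subseq by (simp add: Srel_def LIMSEQ_iff)
qed

lemma gd_convergent:
  assumes "gcauchy \<sigma>" "gcauchy \<tau>"
  shows "convergent (\<lambda>k. gd (\<sigma> k) (\<tau> k))"
proof -
  have "\<exists>M. \<forall>m\<ge>M. \<forall>n\<ge>M. dist (gd (\<sigma> m) (\<tau> m)) (gd (\<sigma> n) (\<tau> n)) < e" if "0 < e" for e
  proof -
    obtain M1 M2 where M1: "\<forall>m\<ge>M1. \<forall>n\<ge>M1. gd (\<sigma> m) (\<sigma> n) < e/2"
      and M2: "\<forall>m\<ge>M2. \<forall>n\<ge>M2. gd (\<tau> m) (\<tau> n) < e/2"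
      using assms \<open>0 < e\<close> unfolding gcauchy_def by (meson half_gt_zero)
    show ?thesis
    proof (intro exI[of _ "max M1 M2"] allI impI)
      fix i j assume "max M1 M2 \<le> i" "max M1 M2 \<le> j"
      then have "gd (\<sigma> i) (\<sigma> j) < e/2" "gd (\<tau> i) (\<tau> j) < e/2" using M1 M2 by auto
      then show "dist (gd (\<sigma> i) (\<tau> i)) (gd (\<sigma> j) (\<tau> j)) < e"
        using gd_diff_le[of "\<sigma> j" "\<tau> j" "\<sigma> i" "\<tau> i"] unfolding dist_real_def by linarith
    qed
  qed
  then have "Cauchy (\<lambda>k. gd (\<sigma> k) (\<tau> k))" by (rule metric_CauchyI)
  then show ?thesis by (simp add: Cauchy_convergent_iff)
qed

lemma Sdist_tendsto:
  assumes "gcauchy \<sigma>" "gcauchy \<tau>"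
  shows "(\<lambda>k. gd (\<sigma> k) (\<tau> k)) \<longlonglongrightarrow> Sdist (Scls \<sigma>) (Scls \<tau>)"
proof -
  define \<sigma>' where "\<sigma>' = (SOME \<rho>. \<rho> \<in> Scls \<sigma>)"
  define \<tau>' where "\<tau>' = (SOME \<rho>. \<rho> \<in> Scls \<tau>)"
  have "(\<sigma>,\<sigma>') \<in> Srel" "(\<tau>,\<tau>') \<in> Srel"
    using Srel_some_in_Scls assms unfolding \<sigma>'_def \<tau>'_def by auto
  then have close: "(\<lambda>k. gd (\<sigma> k) (\<sigma>' k) + gd (\<tau> k) (\<tau>' k)) \<longlonglongrightarrow> 0"
    using tendsto_add[of "\<lambda>k. gd (\<sigma> k) (\<sigma>' k)" 0 _ "\<lambda>k. gd (\<tau> k) (\<tau>' k)" 0]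
    by (simp add: Srel_def)
  have "(\<lambda>k. \<bar>gd (\<sigma>' k) (\<tau>' k) - gd (\<sigma> k) (\<tau> k)\<bar>) \<longlonglongrightarrow> 0"
    by (rule real_tendsto_sandwich[OF _ _ tendsto_const close]) (simp_all add: gd_diff_le)
  then have "(\<lambda>k. gd (\<sigma>' k) (\<tau>' k) - gd (\<sigma> k) (\<tau> k)) \<longlonglongrightarrow> 0"
    by (rule tendsto_rabs_zero_cancel)
  moreover obtain L where L: "(\<lambda>k. gd (\<sigma> k) (\<tau> k)) \<longlonglongrightarrow> L"
    using gd_convergent[OF assms] convergent_def by blast
  ultimately have "(\<lambda>k. gd (\<sigma>' k) (\<tau>' k) - gd (\<sigma> k) (\<tau> k) + gd (\<sigma> k) (\<tau> k)) \<longlonglongrightarrow> 0 + L"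
    by (rule tendsto_add)
  then have "(\<lambda>k. gd (\<sigma>' k) (\<tau>' k)) \<longlonglongrightarrow> L" by simp
  then have "Sdist (Scls \<sigma>) (Scls \<tau>) = L"
    unfolding Sdist_def Let_def \<sigma>'_def [symmetric] \<tau>'_def [symmetric] by (rule limI)
  then show ?thesis using L by simp
qed

lemma Sdist_le:
  assumes "gcauchy \<sigma>" "gcauchy \<tau>" "\<forall>k\<ge>n. gd (\<sigma> k) (\<tau> k) \<le> b"
  shows "Sdist (Scls \<sigma>) (Scls \<tau>) \<le> b"
  by (rule LIMSEQ_le_const2[OF Sdist_tendsto[OF assms(1,2)]]) (use assms(3) in blast)

lemma Sdist_nonneg: "gcauchy \<sigma> \<Longrightarrow> gcauchy \<tau> \<Longrightarrow> 0 \<le> Sdist (Scls \<sigma>) (Scls \<tau>)"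
  by (rule LIMSEQ_le_const[OF Sdist_tendsto]) (auto simp: gd_nonneg)

lemma Sdist_le_1: "gcauchy \<sigma> \<Longrightarrow> gcauchy \<tau> \<Longrightarrow> Sdist (Scls \<sigma>) (Scls \<tau>) \<le> 1"
  using Sdist_le[of \<sigma> \<tau> 0 1] gd_le_1 by blast

lemma Sdist_eq_0_imp_eq:
  "gcauchy \<sigma> \<Longrightarrow> gcauchy \<tau> \<Longrightarrow> Sdist (Scls \<sigma>) (Scls \<tau>) = 0 \<Longrightarrow> Scls \<sigma> = Scls \<tau>"
  using Sdist_tendsto[of \<sigma> \<tau>] by (simp add: Scls_eq_iff Srel_def)

definition prepend_seq :: "Mlet \<Rightarrow> (nat \<Rightarrow> word) \<Rightarrow> nat \<Rightarrow> word" where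
  "prepend_seq m \<sigma> = (\<lambda>k. prepend m (\<sigma> k))"

lemma prepend_seq_const [simp]: "prepend_seq m (\<lambda>_. p) = (\<lambda>_. prepend m p)"
  by (simp add: prepend_seq_def)

lemma gcauchy_prepend_seq_iff: "gcauchy (prepend_seq m \<sigma>) \<longleftrightarrow> gcauchy \<sigma>"
proof -
  have double: "(\<forall>e>0. Q (2 * e)) \<longleftrightarrow> (\<forall>e>0. Q e)" for Q :: "real \<Rightarrow> bool"
  proof
    assume H: "\<forall>e>0. Q (2 * e)"
    show "\<forall>e>0. Q e"
    proof (intro allI impI)
      fix e :: real assume "0 < e"
      with H have "Q (2 * (e/2))" by (meson half_gt_zero)
      then show "Q e" by simp
    qed
  qed simp
  have "gd (\<sigma> i) (\<sigma> j) / 2 < e \<longleftrightarrow> gd (\<sigma> i) (\<sigma> j) < 2 * e" for i j and e :: real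
    by linarith
  then show ?thesis
    using double[of "\<lambda>e. \<exists>N. \<forall>i\<ge>N. \<forall>j\<ge>N. gd (\<sigma> i) (\<sigma> j) < e"]
    by (simp add: gcauchy_def prepend_seq_def gd_prepend_same)
qed

lemma Srel_prepend_seq: "(\<sigma>,\<tau>) \<in> Srel \<Longrightarrow> (prepend_seq m \<sigma>, prepend_seq m \<tau>) \<in> Srel"
  using tendsto_divide[OF _ tendsto_const, of "\<lambda>k. gd (\<sigma> k) (\<tau> k)" 0 sequentially 2]
  by (simp add: Srel_def gcauchy_prepend_seq_iff[unfolded prepend_seq_def] prepend_seq_def
      gd_prepend_same)

lemma Sdist_prepend_seq:
  assumes "gcauchy \<sigma>" "gcauchy \<tau>"
  shows "Sdist (Scls (prepend_seq m \<sigma>)) (Scls (prepend_seq m \<tau>)) = Sdist (Scls \<sigma>) (Scls \<tau>) / 2"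
proof -
  have "(\<lambda>k. gd (prepend_seq m \<sigma> k) (prepend_seq m \<tau> k))
      \<longlonglongrightarrow> Sdist (Scls (prepend_seq m \<sigma>)) (Scls (prepend_seq m \<tau>))"
    by (rule Sdist_tendsto) (simp_all add: gcauchy_prepend_seq_iff assms)
  moreover have "(\<lambda>k. gd (prepend_seq m \<sigma> k) (prepend_seq m \<tau> k)) \<longlonglongrightarrow> Sdist (Scls \<sigma>) (Scls \<tau>) / 2"
    unfolding prepend_seq_def gd_prepend_same by (intro tendsto_divide Sdist_tendsto assms) simp_all
  ultimately show ?thesis by (rule LIMSEQ_unique)
qed

lemma corner_S: "corner ST SL SR P = Scls (\<lambda>_. ([],P))"
  by (cases P) (simp_all add: ST_def SL_def SR_def)

lemma S_corners: "ST \<in> Scar" "SL \<in> Scar" "SR \<in> Scar" "ST \<noteq> SL" "ST \<noteq> SR" "SL \<noteq> SR"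
proof -
  have "Scls (\<lambda>_. ([],P)) \<noteq> Scls (\<lambda>_. ([],Q))" if "P \<noteq> Q" for P Q
    using that gd_corners LIMSEQ_const_iff[of "1::real" 0]
    by (simp add: Scls_eq_iff gcauchy_const Srel_def)
  then show "ST \<in> Scar" "SL \<in> Scar" "SR \<in> Scar" "ST \<noteq> SL" "ST \<noteq> SR" "SL \<noteq> SR"
    unfolding ST_def SL_def SR_def by (simp_all add: Scls_in_Scar gcauchy_const)
qed

lemma tequiv_S: "tequiv Scar ST SL SR
    = {(p,q). p \<in> UNIV \<times> Scar \<and> q \<in> UNIV \<times> Scar \<and> (p = q \<or> glued ST SL SR p q)}"
  using tequiv_eq S_corners .

lemma equiv_tequiv_S: "equiv (UNIV \<times> Scar) (tequiv Scar ST SL SR)"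
  using equiv_tequiv S_corners .

lemma tcar_SE:
  assumes "P \<in> tcar Scar ST SL SR"
  obtains m \<sigma> where "gcauchy \<sigma>" "P = tel Scar ST SL SR m (Scls \<sigma>)"
proof -
  obtain m x where "x \<in> Scar" "P = tel Scar ST SL SR m x" using assms by (rule tcarE)
  moreover obtain \<sigma> where "gcauchy \<sigma>" "x = Scls \<sigma>" using \<open>x \<in> Scar\<close> by (rule ScarE)
  ultimately show ?thesis using that by blast
qed

text \<open>The choice of representatives in psi is irrelevant: the two representatives of a glued
  point yield words at distance 0.\<close>

lemma psi_tel:
  assumes "gcauchy \<sigma>"
  shows "psi (tel Scar ST SL SR m (Scls \<sigma>)) = Scls (prepend_seq m \<sigma>)"
proof -
  let ?P = "tel Scar ST SL SR m (Scls \<sigma>)"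
  define p where "p = (SOME p. p \<in> ?P)"
  define \<sigma>' where "\<sigma>' = (SOME \<sigma>. \<sigma> \<in> snd p)"
  have "(m, Scls \<sigma>) \<in> ?P" unfolding tel_def tequiv_S using Scls_in_Scar[OF assms] by auto
  then have "p \<in> ?P" unfolding p_def by (rule someI)
  then have cases: "p = (m, Scls \<sigma>) \<or> glued ST SL SR (m, Scls \<sigma>) p"
    unfolding mem_tel tequiv_S by auto
  have psi: "psi ?P = Scls (prepend_seq (fst p) \<sigma>')"
    unfolding psi_def Let_def p_def \<sigma>'_def prepend_seq_def prepend_def by simp
  show ?thesis
  proof (cases "p = (m, Scls \<sigma>)")
    case True
    then have "(\<sigma>, \<sigma>') \<in> Srel" unfolding \<sigma>'_def using Srel_some_in_Scls[OF assms] by simp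
    then have "Scls (prepend_seq m \<sigma>) = Scls (prepend_seq m \<sigma>')"
      by (intro Scls_eqI Srel_prepend_seq)
    then show ?thesis using psi True by simp
  next
    case False
    obtain n Q where p: "p = (n, Q)" by fastforce
    then have n: "m \<noteq> n" "Scls \<sigma> = Scls (\<lambda>_. ([], glue_corner m n))"
      and Q: "Q = Scls (\<lambda>_. ([], glue_corner n m))"
      using cases False unfolding glued_def corner_S by auto
    have "(\<sigma>, \<lambda>_. ([], glue_corner m n)) \<in> Srel"
      using n(2) Scls_eq_iff[OF assms gcauchy_const] by blast
    from Srel_prepend_seq[OF this, of m]
    have "(prepend_seq m \<sigma>, \<lambda>_. prepend m ([], glue_corner m n)) \<in> Srel" by simp
    moreover have "((\<lambda>_. prepend m ([], glue_corner m n)), (\<lambda>_. prepend n ([], glue_corner n m))) \<in> Srel"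
      using gd_prepend_glued[OF n(1)] gcauchy_const by (simp add: Srel_def)
    moreover have "((\<lambda>_. ([], glue_corner n m)), \<sigma>') \<in> Srel"
      unfolding \<sigma>'_def p Q snd_conv by (rule Srel_some_in_Scls[OF gcauchy_const])
    from Srel_prepend_seq[OF this, of n]
    have "((\<lambda>_. prepend n ([], glue_corner n m)), prepend_seq n \<sigma>') \<in> Srel" by simp
    ultimately have "(prepend_seq m \<sigma>, prepend_seq n \<sigma>') \<in> Srel" by (blast intro: Srel_trans)
    then show ?thesis using psi p Scls_eqI by simp
  qed
qed

lemma Srel_prepend_seq_same: "(prepend_seq m \<sigma>, prepend_seq m \<tau>) \<in> Srel \<Longrightarrow> (\<sigma>, \<tau>) \<in> Srel"
  using tendsto_mult_left[of "\<lambda>k. gd (\<sigma> k) (\<tau> k) / 2" 0 sequentially 2]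
  by (simp add: Srel_def gcauchy_prepend_seq_iff[unfolded prepend_seq_def] prepend_seq_def
      gd_prepend_same)

lemma Srel_prepend_seq_diff:
  assumes "m \<noteq> n" "(prepend_seq m \<sigma>, prepend_seq n \<tau>) \<in> Srel"
  shows "(\<lambda>k. gd (\<sigma> k) ([], glue_corner m n)) \<longlonglongrightarrow> 0" "(\<lambda>k. gd (\<tau> k) ([], glue_corner n m)) \<longlonglongrightarrow> 0"
proof -
  define direct where
    "direct k = (gd (\<sigma> k) ([], glue_corner m n) + gd ([], glue_corner n m) (\<tau> k)) / 2" for k
  have lim: "(\<lambda>k. gd (prepend m (\<sigma> k)) (prepend n (\<tau> k))) \<longlonglongrightarrow> 0"
    using assms(2) by (simp add: Srel_def prepend_seq_def)
  \<comment> \<open>once the distance is below 1/2, the route through the third copy is not the shortest\<close>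
  have "gd (prepend m (\<sigma> k)) (prepend n (\<tau> k)) = direct k"
    if "gd (prepend m (\<sigma> k)) (prepend n (\<tau> k)) < 1/2" for k
    using that gd_nonneg[of "\<sigma> k" "([], glue_corner m (third m n))"]
      gd_nonneg[of "([], glue_corner n (third m n))" "\<tau> k"]
    unfolding gd_prepend_diff[OF assms(1)] direct_def by (simp add: min_def split: if_splits)
  then have "\<forall>\<^sub>F k in sequentially. gd (prepend m (\<sigma> k)) (prepend n (\<tau> k)) = direct k"
    using eventually_mono[OF order_tendstoD(2)[OF lim, of "1/2"]] by simp
  then have "direct \<longlonglongrightarrow> 0" by (rule Lim_transform_eventually[OF lim])
  then have twice: "(\<lambda>k. 2 * direct k) \<longlonglongrightarrow> 0" using tendsto_mult_left[of direct 0 _ 2] by simp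
  show "(\<lambda>k. gd (\<sigma> k) ([], glue_corner m n)) \<longlonglongrightarrow> 0"
    by (rule real_tendsto_sandwich[OF _ _ tendsto_const twice]) (simp_all add: direct_def gd_nonneg)
  show "(\<lambda>k. gd (\<tau> k) ([], glue_corner n m)) \<longlonglongrightarrow> 0"
    by (rule real_tendsto_sandwich[OF _ _ tendsto_const twice])
      (simp_all add: direct_def gd_nonneg gd_sym[of "\<tau> _"])
qed

lemma psi_inj: "inj_on psi (tcar Scar ST SL SR)"
proof (rule inj_onI)
  fix P Q assume P: "P \<in> tcar Scar ST SL SR" and Q: "Q \<in> tcar Scar ST SL SR"
    and eq: "psi P = psi Q"
  obtain m \<sigma> where \<sigma>: "gcauchy \<sigma>" "P = tel Scar ST SL SR m (Scls \<sigma>)" using P by (rule tcar_SE)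
  obtain n \<tau> where \<tau>: "gcauchy \<tau>" "Q = tel Scar ST SL SR n (Scls \<tau>)" using Q by (rule tcar_SE)
  have "Scls (prepend_seq m \<sigma>) = Scls (prepend_seq n \<tau>)" using eq psi_tel \<sigma> \<tau> by simp
  then have rel: "(prepend_seq m \<sigma>, prepend_seq n \<tau>) \<in> Srel"
    using Scls_eq_iff gcauchy_prepend_seq_iff \<sigma>(1) \<tau>(1) by blast
  show "P = Q"
  proof (cases "m = n")
    case True
    then have "Scls \<sigma> = Scls \<tau>" using Srel_prepend_seq_same rel Scls_eqI by blast
    then show ?thesis using True \<sigma>(2) \<tau>(2) by simp
  next
    case False
    have "Scls \<sigma> = corner ST SL SR (glue_corner m n)" "Scls \<tau> = corner ST SL SR (glue_corner n m)"
      using Srel_prepend_seq_diff[OF False rel] \<sigma>(1) \<tau>(1)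
      unfolding corner_S by (simp_all add: Scls_eq_iff gcauchy_const Srel_def)
    then have "((m, Scls \<sigma>), (n, Scls \<tau>)) \<in> tequiv Scar ST SL SR"
      unfolding tequiv_S glued_def using False Scls_in_Scar[OF \<sigma>(1)] Scls_in_Scar[OF \<tau>(1)]
      by simp
    then show ?thesis using \<sigma>(2) \<tau>(2) tel_eq_tel_if_tequiv[OF equiv_tequiv_S] by simp
  qed
qed

lemma finite_UNIV_Mlet: "finite (UNIV :: Mlet set)"
proof -
  have "(UNIV :: Mlet set) = {A, B, C}" by (auto intro: Mlet.exhaust)
  then show ?thesis by (metis finite.emptyI finite_insert)
qed

text \<open>Every Cauchy sequence is equivalent to one with a constant first letter: pad all words
  (which leaves the point of G unchanged) and pass to a subsequence.\<close>

lemma Srel_prepend_seq_ex: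
  assumes "gcauchy \<sigma>"
  obtains m \<tau> where "gcauchy \<tau>" "(\<sigma>, prepend_seq m \<tau>) \<in> Srel"
proof -
  define \<sigma>' where "\<sigma>' = emb \<circ> \<sigma>"
  define h where "h k = hd (fst (\<sigma>' k))" for k
  have "gcauchy \<sigma>'" using assms unfolding gcauchy_def \<sigma>'_def by (simp add: gd_emb_emb)
  then have \<sigma>\<sigma>': "(\<sigma>, \<sigma>') \<in> Srel" using assms gd_emb gd_sym by (simp add: Srel_def \<sigma>'_def)
  have "finite (range h)" by (rule finite_subset[OF subset_UNIV finite_UNIV_Mlet])
  then obtain k0 where "infinite {k \<in> UNIV. h k = h k0}"
    using pigeonhole_infinite[OF infinite_UNIV_nat] by blast
  then obtain \<phi> :: "nat \<Rightarrow> nat" where \<phi>: "strict_mono \<phi>" "\<And>k. h (\<phi> k) = h k0"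
    using infinite_enumerate by force
  define m where "m = h k0"
  define \<tau> where "\<tau> k = (tl (fst (\<sigma>' (\<phi> k))), snd (\<sigma>' (\<phi> k)))" for k
  have "fst (\<sigma>' k) \<noteq> []" for k by (simp add: \<sigma>'_def emb_def)
  then have "m # tl (fst (\<sigma>' (\<phi> k))) = fst (\<sigma>' (\<phi> k))" for k
    using \<phi>(2)[of k] unfolding m_def h_def by (metis hd_Cons_tl)
  then have \<tau>: "prepend_seq m \<tau> = \<sigma>' \<circ> \<phi>"
    by (simp add: prepend_seq_def prepend_def \<tau>_def fun_eq_iff)
  have "gcauchy (prepend_seq m \<tau>)"
    unfolding \<tau> by (rule gcauchy_subseq[OF \<open>gcauchy \<sigma>'\<close> \<phi>(1)])
  then have "gcauchy \<tau>" by (simp add: gcauchy_prepend_seq_iff)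
  moreover have "(\<sigma>, prepend_seq m \<tau>) \<in> Srel"
    using Srel_trans[OF \<sigma>\<sigma>' Srel_subseq[OF \<open>gcauchy \<sigma>'\<close> \<phi>(1)]] unfolding \<tau> .
  ultimately show ?thesis by (rule that)
qed

lemma psi_surj: "psi ` tcar Scar ST SL SR = Scar"
proof
  show "psi ` tcar Scar ST SL SR \<subseteq> Scar"
  proof
    fix Q assume "Q \<in> psi ` tcar Scar ST SL SR"
    then obtain P where P: "P \<in> tcar Scar ST SL SR" and Q: "Q = psi P" by blast
    obtain m \<sigma> where "gcauchy \<sigma>" "P = tel Scar ST SL SR m (Scls \<sigma>)" using P by (rule tcar_SE)
    then show "Q \<in> Scar" by (simp add: Q psi_tel Scls_in_Scar gcauchy_prepend_seq_iff)
  qed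
  show "Scar \<subseteq> psi ` tcar Scar ST SL SR"
  proof
    fix Q assume "Q \<in> Scar"
    then obtain \<sigma> where "gcauchy \<sigma>" "Q = Scls \<sigma>" by (rule ScarE)
    moreover obtain m \<tau> where "gcauchy \<tau>" "(\<sigma>, prepend_seq m \<tau>) \<in> Srel"
      using Srel_prepend_seq_ex[OF \<open>gcauchy \<sigma>\<close>] .
    ultimately have "Q = psi (tel Scar ST SL SR m (Scls \<tau>))"
      using Scls_eqI[of \<sigma> "prepend_seq m \<tau>"] psi_tel[of \<tau> m] by simp
    moreover have "tel Scar ST SL SR m (Scls \<tau>) \<in> tcar Scar ST SL SR"
      by (rule tel_in_tcar[OF Scls_in_Scar[OF \<open>gcauchy \<tau>\<close>]])
    ultimately show "Q \<in> psi ` tcar Scar ST SL SR" by (rule image_eqI)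
  qed
qed

lemma sgas_psi: "P \<in> tcar Scar ST SL SR \<Longrightarrow> sgas (psi P) = P"
  unfolding sgas_def by (rule inv_into_f_f[OF psi_inj])

lemma psi_sgas: "Q \<in> Scar \<Longrightarrow> psi (sgas Q) = Q"
  unfolding sgas_def by (rule f_inv_into_f) (simp add: psi_surj)

section \<open>The unique coalgebra morphism into S\<close>

lemma finite_UNIV_Pt: "finite (UNIV :: Pt set)"
proof -
  have "(UNIV :: Pt set) = {T, L, R}" by (auto intro: Pt.exhaust)
  then show ?thesis by (metis finite.emptyI finite_insert)
qed

lemma ex_inverse_pow2_less: "0 < (e::real) \<Longrightarrow> \<exists>n. 1 / 2 ^ n < e"
  using real_arch_pow_inv[of e "1/2::real"] by (auto simp: power_one_over)

locale coalgebra =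
  fixes X :: "'x set" and d :: "'x \<Rightarrow> 'x \<Rightarrow> real" and t l r :: 'x
    and e :: "'x \<Rightarrow> (Mlet \<times> 'x) set"
  assumes tripointed: "tripointed X d t l r"
    and hom: "met3c_hom X d t l r (tcar X t l r) (tdist X d t l r)
           (tel X t l r A t) (tel X t l r B l) (tel X t l r C r) e"
begin

sublocale tripointed_pseudometric X d t l r
  using tripointed by (rule tripointed_imp_pseudometric)

definition morphism :: "('x \<Rightarrow> (nat \<Rightarrow> word) set) \<Rightarrow> bool" where
  "morphism f \<longleftrightarrow> met3c_hom X d t l r Scar Sdist ST SL SR f
     \<and> (\<forall>x\<in>X. sgas (f x) = tmap Scar ST SL SR f (e x))"

lemma e_in_tcar: "x \<in> X \<Longrightarrow> e x \<in> tcar X t l r"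
  using hom unfolding met3c_hom_def mcont_def by blast

lemma e_continuous:
  "x \<in> X \<Longrightarrow> 0 < \<epsilon> \<Longrightarrow> \<exists>\<delta>>0. \<forall>y\<in>X. d x y < \<delta> \<longrightarrow> tdist X d t l r (e x) (e y) < \<epsilon>"
  using hom unfolding met3c_hom_def mcont_def by blast

lemma e_corner: "e (corner t l r P) = tel X t l r (bang_letter P) (corner t l r P)"
  using hom unfolding met3c_hom_def by (cases P) auto

text \<open>The representative is chosen by the same SOME as in tmap, so that
  tmap f (e x) = letter x \<otimes> f (tail x) holds literally.\<close>

definition rep :: "'x \<Rightarrow> Mlet \<times> 'x" where "rep x = (SOME p. p \<in> e x)"
definition letter :: "'x \<Rightarrow> Mlet" where "letter x = fst (rep x)"
definition tail :: "'x \<Rightarrow> 'x" where "tail x = snd (rep x)"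

lemma tmap_e: "tmap Scar ST SL SR f (e x) = tel Scar ST SL SR (letter x) (f (tail x))"
  unfolding tmap_def Let_def letter_def tail_def rep_def by simp

lemma tail_in_e_eq_tel:
  assumes "x \<in> X"
  shows "tail x \<in> X \<and> e x = tel X t l r (letter x) (tail x)"
proof -
  obtain m y where y: "y \<in> X" "e x = tel X t l r m y" using e_in_tcar[OF assms] by (rule tcarE)
  then have "(m,y) \<in> e x" using self_in_tel by simp
  then have rep: "rep x \<in> e x" unfolding rep_def by (rule someI)
  then have "((m,y), rep x) \<in> tequiv X t l r" using y by (simp add: mem_tel)
  then have "tail x \<in> X" unfolding tail_def tequiv_char by auto
  moreover have "e x = tel X t l r (letter x) (tail x)"
    using tel_of_mem[OF equiv, of "rep x" m y] rep y by (simp add: letter_def tail_def)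
  ultimately show ?thesis by blast
qed

lemma tail_in: "x \<in> X \<Longrightarrow> tail x \<in> X"
  using tail_in_e_eq_tel by blast

lemma e_eq_tel: "x \<in> X \<Longrightarrow> e x = tel X t l r (letter x) (tail x)"
  using tail_in_e_eq_tel by blast

lemma rep_corner: "rep (corner t l r P) = (bang_letter P, corner t l r P)"
  unfolding rep_def e_corner tel_outer_corner by simp

lemma letter_corner: "letter (corner t l r P) = bang_letter P"
  and tail_corner: "tail (corner t l r P) = corner t l r P"
  by (simp_all add: letter_def tail_def rep_corner)

text \<open>The level-0 approximation is arbitrary, except that a corner must start at itself.\<close>

definition start :: "'x \<Rightarrow> Pt" where "start x = (if x = l then L else if x = r then R else T)"

lemma start_corner: "start (corner t l r P) = P"
  using corners_distinct by (cases P) (auto simp: start_def)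

primrec itinerary :: "'x \<Rightarrow> nat \<Rightarrow> word" where
  "itinerary x 0 = ([], start x)"
| "itinerary x (Suc k) = prepend (letter x) (itinerary (tail x) k)"

lemma itinerary_corner: "itinerary (corner t l r P) k = (emb ^^ k) ([], P)"
  unfolding funpow_emb_corner
  by (induction k) (simp_all add: start_corner letter_corner tail_corner prepend_def)

lemma gd_itinerary_corner: "gd (itinerary (corner t l r P) k) ([], P) = 0"
  unfolding itinerary_corner by (rule gd_funpow_emb)

lemma gd_itinerary_le:
  "x \<in> X \<Longrightarrow> n \<le> j \<Longrightarrow> n \<le> k \<Longrightarrow> gd (itinerary x j) (itinerary x k) \<le> 1 / 2 ^ n"
proof (induction n arbitrary: x j k)
  case 0 then show ?case using gd_le_1 by simp
next
  case (Suc n)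
  then obtain j' k' where "j = Suc j'" "k = Suc k'" "n \<le> j'" "n \<le> k'"
    by (cases j; cases k) auto
  then show ?case using Suc.IH[OF tail_in[OF Suc.prems(1)]] by (simp add: gd_prepend_same)
qed

lemma gcauchy_itinerary: "x \<in> X \<Longrightarrow> gcauchy (itinerary x)"
  unfolding gcauchy_def using gd_itinerary_le ex_inverse_pow2_less by (meson le_less_trans)

definition unfold_map :: "'x \<Rightarrow> (nat \<Rightarrow> word) set" where
  "unfold_map x = Scls (itinerary x)"

lemma unfold_map_in_Scar: "x \<in> X \<Longrightarrow> unfold_map x \<in> Scar"
  unfolding unfold_map_def by (rule Scls_in_Scar[OF gcauchy_itinerary])

lemma unfold_map_corner: "unfold_map (corner t l r P) = corner ST SL SR P"
proof -
  have "gcauchy (itinerary (corner t l r P))" by (rule gcauchy_itinerary[OF corner_in_Y])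
  then have "(itinerary (corner t l r P), \<lambda>_. ([], P)) \<in> Srel"
    using gcauchy_const gd_itinerary_corner by (simp add: Srel_def)
  then show ?thesis unfolding unfold_map_def corner_S by (rule Scls_eqI)
qed

lemma unfold_map_eq_psi:
  assumes "x \<in> X"
  shows "unfold_map x = psi (tel Scar ST SL SR (letter x) (unfold_map (tail x)))"
proof -
  have "(itinerary x, itinerary x \<circ> Suc) \<in> Srel"
    by (rule Srel_subseq[OF gcauchy_itinerary[OF assms]]) (simp add: strict_mono_def)
  moreover have "itinerary x \<circ> Suc = prepend_seq (letter x) (itinerary (tail x))"
    by (simp add: prepend_seq_def fun_eq_iff)
  ultimately show ?thesis
    unfolding unfold_map_def psi_tel[OF gcauchy_itinerary[OF tail_in[OF assms]]]
    by (simp add: Scls_eqI)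
qed

lemma unfold_map_coalgebra: "x \<in> X \<Longrightarrow> sgas (unfold_map x) = tmap Scar ST SL SR unfold_map (e x)"
  unfolding tmap_e
  by (subst unfold_map_eq_psi) (simp_all add: sgas_psi tel_in_tcar unfold_map_in_Scar tail_in)

text \<open>Corners get the sharper bound: when the first steps of x and y lie in different copies,
  both tails are close to glue corners, and the bound at the corners is spent there.\<close>

definition closeness :: "'x \<Rightarrow> nat \<Rightarrow> real" where
  "closeness x n = (if x \<in> {t,l,r} then 1 else 3) / 2 ^ n"

definition itineraries_close :: "nat \<Rightarrow> 'x \<Rightarrow> bool" where
  "itineraries_close n x \<longleftrightarrow> (\<exists>\<delta>>0. \<forall>y\<in>X. d x y < \<delta> \<longrightarrow>
      (\<forall>k\<ge>n. gd (itinerary x k) (itinerary y k) \<le> closeness x n))"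

lemma mem_corners_iff: "x \<in> {t,l,r} \<longleftrightarrow> (\<exists>P. x = corner t l r P)"
proof
  assume "x \<in> {t,l,r}"
  then show "\<exists>P. x = corner t l r P" by (auto intro: exI[of _ T] exI[of _ L] exI[of _ R])
next
  assume "\<exists>P. x = corner t l r P"
  then obtain P where "x = corner t l r P" by blast
  then show "x \<in> {t,l,r}" by (cases P) auto
qed

lemma closeness_corner: "closeness (corner t l r P) n = 1 / 2 ^ n"
  unfolding closeness_def using mem_corners_iff by auto

lemma closeness_le: "closeness x n \<le> 3 / 2 ^ n"
  unfolding closeness_def by (simp add: divide_right_mono)

lemma closeness_tail: "closeness (tail x) n / 2 \<le> closeness x (Suc n)"
proof (cases "x \<in> {t,l,r}")
  case True
  then show ?thesis using mem_corners_iff tail_corner closeness_corner by auto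
next
  case False
  then show ?thesis using closeness_le[of "tail x" n] by (simp add: closeness_def)
qed

lemma corners_close:
  assumes "\<forall>x\<in>X. itineraries_close n x"
  obtains \<delta> where "\<delta> > 0" "\<And>P y. y \<in> X \<Longrightarrow> d (corner t l r P) y < \<delta> \<Longrightarrow>
      \<forall>k\<ge>n. gd (itinerary (corner t l r P) k) (itinerary y k) \<le> 1 / 2 ^ n"
proof -
  have "\<exists>\<delta>>0. \<forall>y\<in>X. d (corner t l r P) y < \<delta> \<longrightarrow>
      (\<forall>k\<ge>n. gd (itinerary (corner t l r P) k) (itinerary y k) \<le> 1 / 2 ^ n)" for P
    using assms corner_in_Y closeness_corner unfolding itineraries_close_def by metis
  then obtain \<delta> where \<delta>: "\<And>P. \<delta> P > 0" "\<And>P y. y \<in> X \<Longrightarrow> d (corner t l r P) y < \<delta> P \<Longrightarrow>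
      \<forall>k\<ge>n. gd (itinerary (corner t l r P) k) (itinerary y k) \<le> 1 / 2 ^ n"
    by metis
  show ?thesis
  proof
    show "Min (range \<delta>) > 0" using \<delta>(1) finite_UNIV_Pt by (auto simp: Min_gr_iff)
    show "\<forall>k\<ge>n. gd (itinerary (corner t l r P) k) (itinerary y k) \<le> 1 / 2 ^ n"
      if "y \<in> X" "d (corner t l r P) y < Min (range \<delta>)" for P y
      using \<delta>(2)[OF that(1)] that(2) Min_le[of "range \<delta>" "\<delta> P"] finite_UNIV_Pt by force
  qed
qed

lemma gd_itinerary_Suc_diff:
  assumes "letter x \<noteq> letter y"
  defines "c \<equiv> corner t l r (glue_corner (letter x) (letter y))"
    and "c' \<equiv> corner t l r (glue_corner (letter y) (letter x))"
  shows "gd (itinerary x (Suc k)) (itinerary y (Suc k))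
    \<le> (gd (itinerary c k) (itinerary (tail x) k) + gd (itinerary c' k) (itinerary (tail y) k)) / 2"
proof -
  have "gd (itinerary (tail x) k) ([], glue_corner (letter x) (letter y))
      \<le> gd (itinerary c k) (itinerary (tail x) k)"
    using gd_triangle[of _ "([], glue_corner (letter x) (letter y))" "itinerary c k"]
      gd_itinerary_corner gd_sym[of "itinerary c k"] unfolding c_def by simp
  moreover have "gd ([], glue_corner (letter y) (letter x)) (itinerary (tail y) k)
      \<le> gd (itinerary c' k) (itinerary (tail y) k)"
    using gd_triangle[of "([], glue_corner (letter y) (letter x))" _ "itinerary c' k"]
      gd_itinerary_corner gd_sym[of "([], glue_corner (letter y) (letter x))"] unfolding c'_def by simp
  moreover have "gd (itinerary x (Suc k)) (itinerary y (Suc k))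
      \<le> (gd (itinerary (tail x) k) ([], glue_corner (letter x) (letter y))
          + gd ([], glue_corner (letter y) (letter x)) (itinerary (tail y) k)) / 2"
    unfolding itinerary.simps gd_prepend_diff[OF assms(1)] by (rule min.cobounded1)
  ultimately show ?thesis by argo
qed

lemma itineraries_close_Suc_diff:
  assumes x: "x \<in> X" and y: "y \<in> X" and diff: "letter x \<noteq> letter y"
    and \<delta>: "\<And>P y. y \<in> X \<Longrightarrow> d (corner t l r P) y < \<delta> \<Longrightarrow>
      \<forall>k\<ge>n. gd (itinerary (corner t l r P) k) (itinerary y k) \<le> 1 / 2 ^ n"
    and close: "qdist d t l r (letter x, tail x) (letter y, tail y) < \<eta>"
    and \<eta>: "2 * \<eta> \<le> \<delta>" "2 * \<eta> \<le> 1/2"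
  shows "\<forall>k\<ge>Suc n. gd (itinerary x k) (itinerary y k) \<le> closeness x (Suc n)"
proof -
  let ?c = "corner t l r (glue_corner (letter x) (letter y))"
    and ?c' = "corner t l r (glue_corner (letter y) (letter x))"
  have near: "d ?c (tail x) < 2 * \<eta>" "d ?c' (tail y) < 2 * \<eta>"
    using qdist_diff_less[OF tail_in[OF x] tail_in[OF y] diff close] \<eta> by auto
  \<comment> \<open>the outer corners of M \<otimes> X are glued to nothing, so a corner x cannot be close to y\<close>
  have "x \<notin> {t,l,r}"
  proof
    assume "x \<in> {t,l,r}"
    then obtain P where P: "x = corner t l r P" using mem_corners_iff by blast
    then have "glue_corner (letter x) (letter y) \<noteq> P"
      using glue_corner_bang_letter diff letter_corner by simp
    then have "d ?c (tail x) = 1" using P tail_corner d_corner_corner by simp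
    then show False using near \<eta> by simp
  qed
  show ?thesis
  proof (intro allI impI)
    fix k assume "Suc n \<le> k"
    then obtain k' where k: "k = Suc k'" "n \<le> k'" by (cases k) auto
    have "gd (itinerary x k) (itinerary y k) \<le> (1 / 2 ^ n + 1 / 2 ^ n) / 2"
      using gd_itinerary_Suc_diff[OF diff, of k'] \<delta>[OF tail_in[OF x], of "glue_corner (letter x) (letter y)"]
        \<delta>[OF tail_in[OF y], of "glue_corner (letter y) (letter x)"] near \<eta> k by fastforce
    also have "\<dots> \<le> closeness x (Suc n)"
      using \<open>x \<notin> {t,l,r}\<close> by (simp add: closeness_def field_simps)
    finally show "gd (itinerary x k) (itinerary y k) \<le> closeness x (Suc n)" .
  qed
qed

lemma itineraries_close_Suc:
  assumes IH: "\<forall>x\<in>X. itineraries_close n x" and x: "x \<in> X"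
  shows "itineraries_close (Suc n) x"
proof -
  obtain \<delta>1 where \<delta>1: "\<delta>1 > 0" "\<forall>y\<in>X. d (tail x) y < \<delta>1 \<longrightarrow>
      (\<forall>k\<ge>n. gd (itinerary (tail x) k) (itinerary y k) \<le> closeness (tail x) n)"
    using IH tail_in[OF x] unfolding itineraries_close_def by blast
  obtain \<delta>c where \<delta>c: "\<delta>c > 0" "\<And>P y. y \<in> X \<Longrightarrow> d (corner t l r P) y < \<delta>c \<Longrightarrow>
      \<forall>k\<ge>n. gd (itinerary (corner t l r P) k) (itinerary y k) \<le> 1 / 2 ^ n"
    using corners_close[OF IH] by blast
  define \<eta> where "\<eta> = min (min \<delta>1 \<delta>c) (1/2) / 2"
  have \<eta>: "\<eta> > 0" "2 * \<eta> \<le> \<delta>1" "2 * \<eta> \<le> \<delta>c" "2 * \<eta> \<le> 1/2"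
    using \<delta>1(1) \<delta>c(1) by (auto simp: \<eta>_def)
  obtain \<delta> where \<delta>: "\<delta> > 0" "\<forall>y\<in>X. d x y < \<delta> \<longrightarrow> tdist X d t l r (e x) (e y) < \<eta>"
    using e_continuous[OF x \<eta>(1)] by blast
  have "\<forall>k\<ge>Suc n. gd (itinerary x k) (itinerary y k) \<le> closeness x (Suc n)"
    if y: "y \<in> X" "d x y < \<delta>" for y
  proof -
    have close: "qdist d t l r (letter x, tail x) (letter y, tail y) < \<eta>"
      using \<delta>(2) y e_eq_tel[OF x] e_eq_tel[OF y(1)] tdist_tel[OF tail_in[OF x] tail_in[OF y(1)]]
      by auto
    show ?thesis
    proof (cases "letter x = letter y")
      case True
      then have "d (tail x) (tail y) < \<delta>1" using close \<eta> by simp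
      then have tails: "\<forall>k\<ge>n. gd (itinerary (tail x) k) (itinerary (tail y) k) \<le> closeness (tail x) n"
        using \<delta>1(2) tail_in[OF y(1)] by blast
      show ?thesis
      proof (intro allI impI)
        fix k assume "Suc n \<le> k"
        then obtain k' where k: "k = Suc k'" "n \<le> k'" by (cases k) auto
        then have "gd (itinerary x k) (itinerary y k)
            = gd (itinerary (tail x) k') (itinerary (tail y) k') / 2"
          using True by (simp add: gd_prepend_same)
        also have "\<dots> \<le> closeness (tail x) n / 2" using tails k(2) by simp
        also have "\<dots> \<le> closeness x (Suc n)" by (rule closeness_tail)
        finally show "gd (itinerary x k) (itinerary y k) \<le> closeness x (Suc n)" .
      qed
    next
      case False
      then show ?thesis
        using itineraries_close_Suc_diff[OF x y(1) False \<delta>c(2) close] \<eta> by simp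
    qed
  qed
  then show ?thesis unfolding itineraries_close_def using \<delta>(1) by blast
qed

lemma itineraries_close: "x \<in> X \<Longrightarrow> itineraries_close n x"
proof (induction n arbitrary: x)
  case 0
  have "gd (itinerary x k) (itinerary y k) \<le> closeness x 0" for y k
    using gd_le_1[of "itinerary x k" "itinerary y k"] by (simp add: closeness_def)
  then show ?case unfolding itineraries_close_def by (auto intro: exI[of _ 1])
next
  case (Suc n)
  then show ?case using itineraries_close_Suc by blast
qed

lemma unfold_map_mcont: "mcont X d Scar Sdist unfold_map"
  unfolding mcont_def
proof (intro conjI ballI allI impI)
  show "unfold_map ` X \<subseteq> Scar" using unfold_map_in_Scar by blast
  fix x and \<epsilon> :: real assume x: "x \<in> X" and "0 < \<epsilon>"
  then obtain n where n: "1 / 2 ^ n < \<epsilon> / 3" using ex_inverse_pow2_less[of "\<epsilon>/3"] by auto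
  obtain \<delta> where \<delta>: "\<delta> > 0" "\<forall>y\<in>X. d x y < \<delta> \<longrightarrow>
      (\<forall>k\<ge>n. gd (itinerary x k) (itinerary y k) \<le> closeness x n)"
    using itineraries_close[OF x] unfolding itineraries_close_def by blast
  have "Sdist (unfold_map x) (unfold_map y) < \<epsilon>" if "y \<in> X" "d x y < \<delta>" for y
  proof -
    have "Sdist (unfold_map x) (unfold_map y) \<le> closeness x n"
      unfolding unfold_map_def using \<delta>(2) that
      by (intro Sdist_le[OF gcauchy_itinerary[OF x] gcauchy_itinerary[OF that(1)]]) blast
    also have "\<dots> \<le> 3 / 2 ^ n" by (rule closeness_le)
    also have "\<dots> < \<epsilon>" using n by (simp add: field_simps)
    finally show ?thesis .
  qed
  then show "\<exists>\<delta>>0. \<forall>y\<in>X. d x y < \<delta> \<longrightarrow> Sdist (unfold_map x) (unfold_map y) < \<epsilon>"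
    using \<delta>(1) by blast
qed

lemma unfold_map_morphism: "morphism unfold_map"
  unfolding morphism_def met3c_hom_def
  using unfold_map_mcont unfold_map_coalgebra unfold_map_corner[of T] unfold_map_corner[of L]
    unfold_map_corner[of R] by simp

lemma morphism_in_Scar: "morphism g \<Longrightarrow> x \<in> X \<Longrightarrow> g x \<in> Scar"
  unfolding morphism_def met3c_hom_def mcont_def by blast

lemma morphism_eq_psi:
  assumes "morphism g" "x \<in> X"
  shows "g x = psi (tel Scar ST SL SR (letter x) (g (tail x)))"
  using psi_sgas[OF morphism_in_Scar[OF assms]] assms unfolding morphism_def tmap_e by simp

lemma Sdist_morphisms_tail:
  assumes g: "morphism g" and h: "morphism h" and x: "x \<in> X"
  shows "Sdist (g x) (h x) = Sdist (g (tail x)) (h (tail x)) / 2"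
proof -
  obtain \<sigma> where \<sigma>: "gcauchy \<sigma>" "g (tail x) = Scls \<sigma>"
    using morphism_in_Scar[OF g tail_in[OF x]] by (rule ScarE)
  obtain \<tau> where \<tau>: "gcauchy \<tau>" "h (tail x) = Scls \<tau>"
    using morphism_in_Scar[OF h tail_in[OF x]] by (rule ScarE)
  have "g x = Scls (prepend_seq (letter x) \<sigma>)" "h x = Scls (prepend_seq (letter x) \<tau>)"
    using morphism_eq_psi[OF g x] morphism_eq_psi[OF h x] \<sigma> \<tau> psi_tel by simp_all
  then show ?thesis using Sdist_prepend_seq[OF \<sigma>(1) \<tau>(1)] \<sigma>(2) \<tau>(2) by simp
qed

lemma morphisms_eq:
  assumes g: "morphism g" and h: "morphism h" and x: "x \<in> X"
  shows "g x = h x"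
proof -
  have Scls: "\<exists>\<sigma> \<tau>. gcauchy \<sigma> \<and> gcauchy \<tau> \<and> g x = Scls \<sigma> \<and> h x = Scls \<tau>" if "x \<in> X" for x
    using morphism_in_Scar[OF g that] morphism_in_Scar[OF h that] by (metis ScarE)
  have bound: "\<forall>x\<in>X. Sdist (g x) (h x) \<le> 1 / 2 ^ n" for n
  proof (induction n)
    case 0 then show ?case using Scls Sdist_le_1 by fastforce
  next
    case (Suc n)
    show ?case
    proof
      fix x assume "x \<in> X"
      then have "Sdist (g (tail x)) (h (tail x)) \<le> 1 / 2 ^ n" using Suc.IH tail_in by blast
      then show "Sdist (g x) (h x) \<le> 1 / 2 ^ Suc n"
        using Sdist_morphisms_tail[OF g h \<open>x \<in> X\<close>] by simp
    qed
  qed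
  obtain \<sigma> \<tau> where \<sigma>\<tau>: "gcauchy \<sigma>" "gcauchy \<tau>" "g x = Scls \<sigma>" "h x = Scls \<tau>"
    using Scls[OF x] by blast
  have "Sdist (g x) (h x) = 0"
  proof (rule ccontr)
    assume "Sdist (g x) (h x) \<noteq> 0"
    then have "0 < Sdist (g x) (h x)" using Sdist_nonneg[OF \<sigma>\<tau>(1,2)] \<sigma>\<tau>(3,4) by simp
    then show False using ex_inverse_pow2_less bound x by (meson not_le)
  qed
  then show ?thesis using Sdist_eq_0_imp_eq[OF \<sigma>\<tau>(1,2)] \<sigma>\<tau>(3,4) by simp
qed

end

theorem mainTheorem9:
  fixes X :: "'x set" and d :: "'x \<Rightarrow> 'x \<Rightarrow> real" and t l r :: 'x
    and e :: "'x \<Rightarrow> (Mlet \<times> 'x) set"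
  assumes "tripointed X d t l r"
    and "met3c_hom X d t l r (tcar X t l r) (tdist X d t l r)
           (tel X t l r A t) (tel X t l r B l) (tel X t l r C r) e"
  shows "\<exists>f. met3c_hom X d t l r Scar Sdist ST SL SR f
            \<and> (\<forall>x\<in>X. sgas (f x) = tmap Scar ST SL SR f (e x))
            \<and> (\<forall>g. met3c_hom X d t l r Scar Sdist ST SL SR g
                   \<and> (\<forall>x\<in>X. sgas (g x) = tmap Scar ST SL SR g (e x))
                   \<longrightarrow> (\<forall>x\<in>X. g x = f x))"
proof -
  interpret coalgebra X d t l r e using assms by (rule coalgebra.intro)
  show ?thesis
    using unfold_map_morphism morphisms_eq unfolding morphism_def by blast
qed

end
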